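(* Let $\phi:\mathcal N_1\to\mathcal N_2$ be an admissible epi-functor between nested graphs. Then there exist a nested graph $\mathcal N_2'$, a merger $\mu:\mathcal N_1\to\mathcal N_2'$ and a contraction $\kappa:\mathcal N_2'\to\mathcal N_2$ such that $\phi=\kappa\circ\mu$ (such a decomposition is in general not unique).
   Context: A nested graph is a small category $\mathcal N$ for which there exists at least one functor $G:\mathcal N\to\underline n$ to a finite ordinal $\underline n$ (viewed as the category with a unique morphism $i\to j$ when $i\le j$ and none otherwise) sending every non-identity morphism to a non-identity morphism. Objects are called nodes. A flag is a non-identity morphism, said to be decorated by its domain. A flag is irreducible if it is not a composite of two flags. A vertex of a nested graph is a node that is not the domain of any flag; a corolla is a nested graph with exactly one vertex. A functor $\phi$ contracts a flag $f$ if $\phi(f)$ is an identity. A functor $\phi:\mathcal N_1\to\mathcal N_2$ between nested graphs is admissible if (1) for every irreducible flag $f$ of $\mathcal N_1$, $\phi(f)$ is an identity or an irreducible flag, and (2) for every irreducible flag $f:A\to B$ of $\mathcal N_1$ contracted by $\phi$, $\phi$ contracts every irreducible flag with domain $A$. An epi-functor $\phi:\mathcal N_1\to\mathcal N_2$ is a functor whose image generates all of $\mathcal N_2$. A merger is an admissible epi-functor $\mu:\mathcal N_1\to\mathcal N_2$ such that $\mathcal N_2$ is a quotient of $\mathcal N_1$ by an equivalence relation on the objects of $\mathcal N_1$. A contraction is an admissible epi-functor $\kappa:\mathcal N_1\to\mathcal N_2$ such that for every node $A_2$ of $\mathcal N_2$ the fiber $\kappa^{-1}(A_2)$ (objects mapped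 to $A_2$, morphisms mapped to the identity of $A_2$) is a corolla. *)

theory Defs
  imports Main
begin

record ('o, 'm) cat =
  cObj  :: "'o set"
  cArr  :: "'m set"
  cDom  :: "'m \<Rightarrow> 'o"
  cCod  :: "'m \<Rightarrow> 'o"
  cId   :: "'o \<Rightarrow> 'm"
  cComp :: "'m \<Rightarrow> 'm \<Rightarrow> 'm"   (* cComp C g f = g \<circ> f, defined when cCod f = cDom g *)

definition category :: "('o, 'm) cat \<Rightarrow> bool" where
  "category C \<longleftrightarrow>
     (\<forall>f\<in>cArr C. cDom C f \<in> cObj C \<and> cCod C f \<in> cObj C) \<and>
     (\<forall>a\<in>cObj C. cId C a \<in> cArr C \<and> cDom C (cId C a) = a \<and> cCod C (cId C a) = a) \<and>
     (\<forall>f\<in>cArr C. \<forall>g\<in>cArr C. cCod C f = cDom C g \<longrightarrow>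
         cComp C g f \<in> cArr C \<and> cDom C (cComp C g f) = cDom C f \<and> cCod C (cComp C g f) = cCod C g) \<and>
     (\<forall>f\<in>cArr C. cComp C f (cId C (cDom C f)) = f \<and> cComp C (cId C (cCod C f)) f = f) \<and>
     (\<forall>f\<in>cArr C. \<forall>g\<in>cArr C. \<forall>h\<in>cArr C. cCod C f = cDom C g \<longrightarrow> cCod C g = cDom C h \<longrightarrow>
         cComp C h (cComp C g f) = cComp C (cComp C h g) f)"

text \<open>A functor is given by its object map and its arrow map (only their values on the
  carriers matter).\<close>

definition is_functor :: "('o1, 'm1) cat \<Rightarrow> ('o2, 'm2) cat \<Rightarrow> ('o1 \<Rightarrow> 'o2) \<Rightarrow> ('m1 \<Rightarrow> 'm2) \<Rightarrow> bool" where
  "is_functor C D Fo Fm \<longleftrightarrow> category C \<and> category D \<and>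
     (\<forall>a\<in>cObj C. Fo a \<in> cObj D) \<and>
     (\<forall>f\<in>cArr C. Fm f \<in> cArr D \<and> cDom D (Fm f) = Fo (cDom C f) \<and> cCod D (Fm f) = Fo (cCod C f)) \<and>
     (\<forall>a\<in>cObj C. Fm (cId C a) = cId D (Fo a)) \<and>
     (\<forall>f\<in>cArr C. \<forall>g\<in>cArr C. cCod C f = cDom C g \<longrightarrow> Fm (cComp C g f) = cComp D (Fm g) (Fm f))"

definition iso_functor :: "('o1, 'm1) cat \<Rightarrow> ('o2, 'm2) cat \<Rightarrow> ('o1 \<Rightarrow> 'o2) \<Rightarrow> ('m1 \<Rightarrow> 'm2) \<Rightarrow> bool" where
  "iso_functor C D Fo Fm \<longleftrightarrow> is_functor C D Fo Fm \<and> bij_betw Fo (cObj C) (cObj D) \<and> bij_betw Fm (cArr C) (cArr D)"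

definition ord_cat :: "nat \<Rightarrow> (nat, nat \<times> nat) cat" where
  "ord_cat n = \<lparr> cObj = {..<n}, cArr = {(i, j). i \<le> j \<and> j < n}, cDom = fst, cCod = snd,
                 cId = (\<lambda>i. (i, i)), cComp = (\<lambda>g f. (fst f, snd g)) \<rparr>"

definition is_flag :: "('o, 'm) cat \<Rightarrow> 'm \<Rightarrow> bool" where
  "is_flag C f \<longleftrightarrow> f \<in> cArr C \<and> f \<noteq> cId C (cDom C f)"

definition nested_graph :: "('o, 'm) cat \<Rightarrow> bool" where
  "nested_graph N \<longleftrightarrow> category N \<and>
     (\<exists>n Go Gm. is_functor N (ord_cat n) Go Gm \<and> (\<forall>f. is_flag N f \<longrightarrow> is_flag (ord_cat n) (Gm f)))"

definition irreducible_flag :: "('o, 'm) cat \<Rightarrow> 'm \<Rightarrow> bool" where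
  "irreducible_flag C f \<longleftrightarrow> is_flag C f \<and>
     \<not> (\<exists>g h. is_flag C g \<and> is_flag C h \<and> cCod C h = cDom C g \<and> f = cComp C g h)"

definition is_vertex :: "('o, 'm) cat \<Rightarrow> 'o \<Rightarrow> bool" where
  "is_vertex C a \<longleftrightarrow> a \<in> cObj C \<and> \<not> (\<exists>f. is_flag C f \<and> cDom C f = a)"

definition corolla :: "('o, 'm) cat \<Rightarrow> bool" where
  "corolla C \<longleftrightarrow> nested_graph C \<and> (\<exists>!a. is_vertex C a)"

definition contracts :: "('o1, 'm1) cat \<Rightarrow> ('o2, 'm2) cat \<Rightarrow> ('o1 \<Rightarrow> 'o2) \<Rightarrow> ('m1 \<Rightarrow> 'm2) \<Rightarrow> 'm1 \<Rightarrow> bool" where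
  "contracts C D Fo Fm f \<longleftrightarrow> Fm f = cId D (Fo (cDom C f))"

definition admissible :: "('o1, 'm1) cat \<Rightarrow> ('o2, 'm2) cat \<Rightarrow> ('o1 \<Rightarrow> 'o2) \<Rightarrow> ('m1 \<Rightarrow> 'm2) \<Rightarrow> bool" where
  "admissible C D Fo Fm \<longleftrightarrow> is_functor C D Fo Fm \<and>
     (\<forall>f. irreducible_flag C f \<longrightarrow> contracts C D Fo Fm f \<or> irreducible_flag D (Fm f)) \<and>
     (\<forall>f g. irreducible_flag C f \<longrightarrow> contracts C D Fo Fm f \<longrightarrow>
            irreducible_flag C g \<longrightarrow> cDom C g = cDom C f \<longrightarrow> contracts C D Fo Fm g)"

inductive_set generated_arrows :: "('o, 'm) cat \<Rightarrow> 'm set \<Rightarrow> 'm set" for C S where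
  gen_base: "f \<in> S \<Longrightarrow> f \<in> generated_arrows C S"
| gen_comp: "f \<in> generated_arrows C S \<Longrightarrow> g \<in> generated_arrows C S \<Longrightarrow> cCod C f = cDom C g
              \<Longrightarrow> cComp C g f \<in> generated_arrows C S"

definition epi_functor :: "('o1, 'm1) cat \<Rightarrow> ('o2, 'm2) cat \<Rightarrow> ('o1 \<Rightarrow> 'o2) \<Rightarrow> ('m1 \<Rightarrow> 'm2) \<Rightarrow> bool" where
  "epi_functor C D Fo Fm \<longleftrightarrow> is_functor C D Fo Fm \<and> cArr D \<subseteq> generated_arrows D (Fm ` cArr C)"

text \<open>Arrows of the quotient \<open>C/R\<close> are classes of nonempty paths \<open>[f1,...,fk]\<close> (diagram order)
  of arrows of \<open>C\<close> with \<open>cCod fi R cDom f(i+1)\<close>, modulo the congruence generated by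
  composition in \<open>C\<close> and deletion of identities.  This is the category freely obtained from
  \<open>C\<close> by identifying \<open>R\<close>-equivalent objects.\<close>

definition qpath :: "('o, 'm) cat \<Rightarrow> 'o rel \<Rightarrow> 'm list \<Rightarrow> bool" where
  "qpath C R ps \<longleftrightarrow> ps \<noteq> [] \<and> set ps \<subseteq> cArr C \<and>
     (\<forall>i. Suc i < length ps \<longrightarrow> (cCod C (ps ! i), cDom C (ps ! Suc i)) \<in> R)"

inductive_set qstep :: "('o, 'm) cat \<Rightarrow> 'o rel \<Rightarrow> ('m list \<times> 'm list) set" for C R where
  qstep_comp: "qpath C R (p @ [f, g] @ q) \<Longrightarrow> cCod C f = cDom C g
                 \<Longrightarrow> (p @ [f, g] @ q, p @ [cComp C g f] @ q) \<in> qstep C R"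
| qstep_id: "qpath C R (p @ [cId C a] @ q) \<Longrightarrow> a \<in> cObj C \<Longrightarrow> p @ q \<noteq> []
                 \<Longrightarrow> (p @ [cId C a] @ q, p @ q) \<in> qstep C R"

definition qeq :: "('o, 'm) cat \<Rightarrow> 'o rel \<Rightarrow> ('m list \<times> 'm list) set" where
  "qeq C R = (qstep C R \<union> (qstep C R)\<inverse>)\<^sup>*"

definition quot_cat :: "('o, 'm) cat \<Rightarrow> 'o rel \<Rightarrow> ('o set, 'm list set) cat" where
  "quot_cat C R = \<lparr>
     cObj = cObj C // R,
     cArr = {qeq C R `` {p} | p. qpath C R p},
     cDom = (\<lambda>P. R `` {cDom C (hd (SOME p. p \<in> P))}),
     cCod = (\<lambda>P. R `` {cCod C (last (SOME p. p \<in> P))}),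
     cId = (\<lambda>X. qeq C R `` {[cId C (SOME a. a \<in> X)]}),
     cComp = (\<lambda>Q P. qeq C R `` {(SOME p. p \<in> P) @ (SOME q. q \<in> Q)}) \<rparr>"

text \<open>\<open>D\<close> is a quotient of \<open>C\<close> by an equivalence relation on objects, via \<open>F\<close>: \<open>F\<close> is, up to
  isomorphism of the target, the projection \<open>C \<rightarrow> C/R\<close>.\<close>

definition is_quotient :: "('o1, 'm1) cat \<Rightarrow> ('o2, 'm2) cat \<Rightarrow> ('o1 \<Rightarrow> 'o2) \<Rightarrow> ('m1 \<Rightarrow> 'm2) \<Rightarrow> bool" where
  "is_quotient C D Fo Fm \<longleftrightarrow> (\<exists>R. equiv (cObj C) R \<and>
     (\<exists>Io Im. iso_functor (quot_cat C R) D Io Im \<and>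
        (\<forall>a\<in>cObj C. Io (R `` {a}) = Fo a) \<and>
        (\<forall>f\<in>cArr C. Im (qeq C R `` {[f]}) = Fm f)))"

definition merger :: "('o1, 'm1) cat \<Rightarrow> ('o2, 'm2) cat \<Rightarrow> ('o1 \<Rightarrow> 'o2) \<Rightarrow> ('m1 \<Rightarrow> 'm2) \<Rightarrow> bool" where
  "merger C D Fo Fm \<longleftrightarrow> admissible C D Fo Fm \<and> epi_functor C D Fo Fm \<and> is_quotient C D Fo Fm"

definition fiber :: "('o1, 'm1) cat \<Rightarrow> ('o2, 'm2) cat \<Rightarrow> ('o1 \<Rightarrow> 'o2) \<Rightarrow> ('m1 \<Rightarrow> 'm2) \<Rightarrow> 'o2 \<Rightarrow> ('o1, 'm1) cat" where
  "fiber C D Fo Fm A = \<lparr> cObj = {a \<in> cObj C. Fo a = A}, cArr = {f \<in> cArr C. Fm f = cId D A},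
      cDom = cDom C, cCod = cCod C, cId = cId C, cComp = cComp C \<rparr>"

definition contraction :: "('o1, 'm1) cat \<Rightarrow> ('o2, 'm2) cat \<Rightarrow> ('o1 \<Rightarrow> 'o2) \<Rightarrow> ('m1 \<Rightarrow> 'm2) \<Rightarrow> bool" where
  "contraction C D Fo Fm \<longleftrightarrow> admissible C D Fo Fm \<and> epi_functor C D Fo Fm \<and>
     (\<forall>A\<in>cObj D. corolla (fiber C D Fo Fm A))"

end

theory Submission
  imports Defs
begin

text \<open>
  Call a node of \<open>N\<^sub>1\<close> free if no flag decorated by it is contracted by \<open>\<phi>\<close>.  Identifying
  any two free nodes with the same image under \<open>\<phi>\<close> gives an equivalence relation; the quotient
  \<open>N\<^sub>2' = N\<^sub>1/\<sim>\<close> receives the projection \<open>\<mu>\<close>, which is a merger, and \<open>\<phi>\<close> factors through it as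
  \<open>\<kappa> \<circ> \<mu>\<close>.  Every node of \<open>N\<^sub>2\<close> lies under a free node (follow contracted flags upwards, which
  terminates by nestedness), and the class of free nodes over a node \<open>A\<close> is the unique node of the
  fiber \<open>\<kappa>\<^sup>-\<^sup>1(A)\<close> from which no contracted flag starts, so every fiber is a corolla.

  Arrows of the quotient are classes of composable paths modulo a rewriting congruence.  To decide
  which classes are flags, and which are irreducible, every path is brought into a normal form: a
  path without identities in which no two consecutive arrows are composable in \<open>N\<^sub>1\<close>.  The normal
  form is invariant under the congruence, and in a nested graph such paths never compose to an
  identity.
\<close>

lemma cat_dom_obj: "category C \<Longrightarrow> f \<in> cArr C \<Longrightarrow> cDom C f \<in> cObj C"
  unfolding category_def by blast
lemma cat_cod_obj: "category C \<Longrightarrow> f \<in> cArr C \<Longrightarrow> cCod C f \<in> cObj C"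
  unfolding category_def by blast
lemma cat_id_arr: "category C \<Longrightarrow> a \<in> cObj C \<Longrightarrow> cId C a \<in> cArr C"
  unfolding category_def by blast
lemma cat_id_dom[simp]: "category C \<Longrightarrow> a \<in> cObj C \<Longrightarrow> cDom C (cId C a) = a"
  unfolding category_def by blast
lemma cat_id_cod[simp]: "category C \<Longrightarrow> a \<in> cObj C \<Longrightarrow> cCod C (cId C a) = a"
  unfolding category_def by blast
lemma cat_comp_arr:
  "category C \<Longrightarrow> f \<in> cArr C \<Longrightarrow> g \<in> cArr C \<Longrightarrow> cCod C f = cDom C g \<Longrightarrow> cComp C g f \<in> cArr C"
  unfolding category_def by blast
lemma cat_comp_dom[simp]:
  "category C \<Longrightarrow> f \<in> cArr C \<Longrightarrow> g \<in> cArr C \<Longrightarrow> cCod C f = cDom C g \<Longrightarrow> cDom C (cComp C g f) = cDom C f"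
  unfolding category_def by blast
lemma cat_comp_cod[simp]:
  "category C \<Longrightarrow> f \<in> cArr C \<Longrightarrow> g \<in> cArr C \<Longrightarrow> cCod C f = cDom C g \<Longrightarrow> cCod C (cComp C g f) = cCod C g"
  unfolding category_def by blast
lemma cat_id_left: "category C \<Longrightarrow> f \<in> cArr C \<Longrightarrow> cComp C (cId C (cCod C f)) f = f"
  unfolding category_def by blast
lemma cat_id_right: "category C \<Longrightarrow> f \<in> cArr C \<Longrightarrow> cComp C f (cId C (cDom C f)) = f"
  unfolding category_def by blast
lemma cat_comp_assoc:
  "category C \<Longrightarrow> f \<in> cArr C \<Longrightarrow> g \<in> cArr C \<Longrightarrow> h \<in> cArr C \<Longrightarrow>
   cCod C f = cDom C g \<Longrightarrow> cCod C g = cDom C h \<Longrightarrow>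
   cComp C h (cComp C g f) = cComp C (cComp C h g) f"
  unfolding category_def by blast

lemma functor_source_category: "is_functor C D Fo Fm \<Longrightarrow> category C"
  by (simp add: is_functor_def)
lemma functor_target_category: "is_functor C D Fo Fm \<Longrightarrow> category D"
  by (simp add: is_functor_def)
lemma functor_obj: "is_functor C D Fo Fm \<Longrightarrow> a \<in> cObj C \<Longrightarrow> Fo a \<in> cObj D"
  by (simp add: is_functor_def)
lemma functor_arr:
  "is_functor C D Fo Fm \<Longrightarrow> f \<in> cArr C \<Longrightarrow>
   Fm f \<in> cArr D \<and> cDom D (Fm f) = Fo (cDom C f) \<and> cCod D (Fm f) = Fo (cCod C f)"
  by (simp add: is_functor_def)
lemma functor_id: "is_functor C D Fo Fm \<Longrightarrow> a \<in> cObj C \<Longrightarrow> Fm (cId C a) = cId D (Fo a)"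
  by (simp add: is_functor_def)
lemma functor_comp:
  "is_functor C D Fo Fm \<Longrightarrow> f \<in> cArr C \<Longrightarrow> g \<in> cArr C \<Longrightarrow> cCod C f = cDom C g \<Longrightarrow>
   Fm (cComp C g f) = cComp D (Fm g) (Fm f)"
  by (simp add: is_functor_def)

definition is_identity :: "('o, 'm) cat \<Rightarrow> 'm \<Rightarrow> bool" where
  "is_identity C f \<longleftrightarrow> f = cId C (cDom C f)"

lemma is_identity_id: "category C \<Longrightarrow> a \<in> cObj C \<Longrightarrow> is_identity C (cId C a)"
  by (simp add: is_identity_def)

lemma is_flag_iff: "is_flag C f \<longleftrightarrow> f \<in> cArr C \<and> \<not> is_identity C f"
  by (simp add: is_flag_def is_identity_def)

lemma is_identity_cod:
  "category C \<Longrightarrow> f \<in> cArr C \<Longrightarrow> is_identity C f \<Longrightarrow> cCod C f = cDom C f"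
  unfolding is_identity_def by (metis cat_dom_obj cat_id_cod)

lemma comp_identity_left:
  "category C \<Longrightarrow> f \<in> cArr C \<Longrightarrow> g \<in> cArr C \<Longrightarrow> cCod C f = cDom C g \<Longrightarrow> is_identity C g \<Longrightarrow>
   cComp C g f = f"
  unfolding is_identity_def by (metis cat_id_left)

lemma comp_identity_right:
  "category C \<Longrightarrow> f \<in> cArr C \<Longrightarrow> g \<in> cArr C \<Longrightarrow> cCod C f = cDom C g \<Longrightarrow> is_identity C f \<Longrightarrow>
   cComp C g f = g"
  using is_identity_cod unfolding is_identity_def by (metis cat_id_right)

lemma category_subcat:
  assumes cat: "category C"
    and arr: "\<And>f. f \<in> T \<Longrightarrow> f \<in> cArr C \<and> cDom C f \<in> S \<and> cCod C f \<in> S"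
    and id: "\<And>a. a \<in> S \<Longrightarrow> a \<in> cObj C \<and> cId C a \<in> T"
    and comp: "\<And>f g. f \<in> T \<Longrightarrow> g \<in> T \<Longrightarrow> cCod C f = cDom C g \<Longrightarrow> cComp C g f \<in> T"
  shows "category \<lparr>cObj = S, cArr = T, cDom = cDom C, cCod = cCod C, cId = cId C, cComp = cComp C\<rparr>"
  unfolding category_def
proof (simp only: cat.simps, intro conjI ballI impI)
  fix f assume "f \<in> T" then show "cDom C f \<in> S" "cCod C f \<in> S" using arr by auto
next
  fix a assume a: "a \<in> S"
  then show "cId C a \<in> T" using id by blast
  show "cDom C (cId C a) = a" "cCod C (cId C a) = a" using id[OF a] cat by auto
next
  fix f g assume f: "f \<in> T" and g: "g \<in> T" and fg: "cCod C f = cDom C g"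
  show "cComp C g f \<in> T" using comp f g fg by blast
  show "cDom C (cComp C g f) = cDom C f" "cCod C (cComp C g f) = cCod C g"
    using arr[OF f] arr[OF g] fg cat by auto
next
  fix f assume "f \<in> T"
  then show "cComp C f (cId C (cDom C f)) = f" "cComp C (cId C (cCod C f)) f = f"
    using arr cat_id_left[OF cat] cat_id_right[OF cat] by auto
next
  fix f g h assume "f \<in> T" "g \<in> T" "h \<in> T" "cCod C f = cDom C g" "cCod C g = cDom C h"
  then show "cComp C h (cComp C g f) = cComp C (cComp C h g) f"
    using arr cat_comp_assoc[OF cat] by auto
qed

lemma category_fiber:
  assumes F: "is_functor C D Fo Fm" and A: "A \<in> cObj D"
  shows "category (fiber C D Fo Fm A)"
  unfolding fiber_def
proof (rule category_subcat)
  have catC: "category C" and catD: "category D"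
    using F functor_source_category functor_target_category by blast+
  show "category C" by (rule catC)
  fix f assume "f \<in> {f \<in> cArr C. Fm f = cId D A}"
  then have f: "f \<in> cArr C" "Fm f = cId D A" by auto
  then have "Fo (cDom C f) = A" "Fo (cCod C f) = A"
    using functor_arr[OF F f(1)] catD A by auto
  then show "f \<in> cArr C \<and> cDom C f \<in> {a \<in> cObj C. Fo a = A} \<and> cCod C f \<in> {a \<in> cObj C. Fo a = A}"
    using cat_dom_obj[OF catC f(1)] cat_cod_obj[OF catC f(1)] f by auto
next
  fix a assume "a \<in> {a \<in> cObj C. Fo a = A}"
  then show "a \<in> cObj C \<and> cId C a \<in> {f \<in> cArr C. Fm f = cId D A}"
    using cat_id_arr[OF functor_source_category[OF F]] functor_id[OF F] by auto
next
  have catD: "category D" using F functor_target_category by blast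
  fix f g assume f: "f \<in> {f \<in> cArr C. Fm f = cId D A}" and g: "g \<in> {f \<in> cArr C. Fm f = cId D A}"
    and fg: "cCod C f = cDom C g"
  have "Fm (cComp C g f) = cComp D (cId D A) (cId D A)" using functor_comp[OF F _ _ fg] f g by auto
  also have "\<dots> = cId D A" using cat_id_left[OF catD cat_id_arr[OF catD A]] catD A by simp
  finally show "cComp C g f \<in> {f \<in> cArr C. Fm f = cId D A}"
    using cat_comp_arr[OF functor_source_category[OF F] _ _ fg] f g by auto
qed

lemma generated_arrows_mono:
  "x \<in> generated_arrows D S \<Longrightarrow> S \<subseteq> T \<Longrightarrow> x \<in> generated_arrows D T"
  by (induction rule: generated_arrows.induct) (auto intro: generated_arrows.intros)

lemma generated_arrows_dom:
  assumes F: "is_functor C D Fo Fm" and g: "g \<in> generated_arrows D (Fm ` cArr C)"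
  shows "g \<in> cArr D \<and> (\<exists>a\<in>cObj C. cDom D g = Fo a)"
  using g
proof (induction rule: generated_arrows.induct)
  case (gen_base f)
  then obtain h where "h \<in> cArr C" "f = Fm h" by blast
  then show ?case
    using functor_arr[OF F] cat_dom_obj[OF functor_source_category[OF F]] by auto
next
  case (gen_comp f g)
  have catD: "category D" using F functor_target_category by blast
  show ?case using gen_comp cat_comp_arr[OF catD] cat_comp_dom[OF catD] by auto
qed

lemma epi_functor_surj_obj:
  assumes "epi_functor C D Fo Fm" and A: "A \<in> cObj D"
  shows "\<exists>a\<in>cObj C. Fo a = A"
proof -
  have F: "is_functor C D Fo Fm" and catD: "category D"
    using assms(1) functor_target_category by (auto simp: epi_functor_def)
  have "cId D A \<in> generated_arrows D (Fm ` cArr C)"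
    using assms cat_id_arr[OF catD A] by (auto simp: epi_functor_def)
  then show ?thesis using generated_arrows_dom[OF F] catD A by fastforce
qed

section \<open>Nested graphs as graded categories\<close>

text \<open>A functor to a finite ordinal sending flags to flags is the same as a bounded grading of
  the nodes that strictly increases along every flag.\<close>

definition grading :: "('o, 'm) cat \<Rightarrow> nat \<Rightarrow> ('o \<Rightarrow> nat) \<Rightarrow> bool" where
  "grading C n rk \<longleftrightarrow> (\<forall>a\<in>cObj C. rk a < n) \<and>
     (\<forall>f\<in>cArr C. \<not> is_identity C f \<longrightarrow> rk (cDom C f) < rk (cCod C f))"

lemma grading_bound: "grading C n rk \<Longrightarrow> a \<in> cObj C \<Longrightarrow> rk a < n"
  by (simp add: grading_def)

lemma grading_strict:
  "grading C n rk \<Longrightarrow> f \<in> cArr C \<Longrightarrow> \<not> is_identity C f \<Longrightarrow> rk (cDom C f) < rk (cCod C f)"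
  by (simp add: grading_def)

lemma grading_mono:
  "category C \<Longrightarrow> grading C n rk \<Longrightarrow> f \<in> cArr C \<Longrightarrow> rk (cDom C f) \<le> rk (cCod C f)"
  by (cases "is_identity C f") (auto simp: is_identity_cod grading_strict less_imp_le)

lemma category_ord_cat: "category (ord_cat n)"
  unfolding category_def ord_cat_def by auto

lemma ord_cat_flag: "is_flag (ord_cat n) x \<longleftrightarrow> fst x < snd x \<and> snd x < n"
  by (cases x) (auto simp: ord_cat_def is_flag_def)

lemma nested_graph_grading:
  assumes "nested_graph C" obtains n rk where "grading C n rk"
proof -
  obtain n Go Gm where F: "is_functor C (ord_cat n) Go Gm"
    and flags: "\<forall>f. is_flag C f \<longrightarrow> is_flag (ord_cat n) (Gm f)"
    using assms by (auto simp: nested_graph_def)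
  have Gm: "Gm f = (Go (cDom C f), Go (cCod C f))" if "f \<in> cArr C" for f
    using functor_arr[OF F that] by (simp add: ord_cat_def prod_eq_iff)
  have "grading C n Go"
    unfolding grading_def
  proof (intro conjI ballI impI)
    fix a assume "a \<in> cObj C"
    then show "Go a < n" using functor_obj[OF F] by (auto simp: ord_cat_def)
  next
    fix f assume f: "f \<in> cArr C" "\<not> is_identity C f"
    then have "is_flag C f" by (simp add: is_flag_iff)
    then have "is_flag (ord_cat n) (Gm f)" using flags by blast
    then show "Go (cDom C f) < Go (cCod C f)" using Gm[OF f(1)] ord_cat_flag by simp
  qed
  then show thesis by (rule that)
qed

lemma nested_graphI_grading:
  assumes cat: "category C" and rk: "grading C n rk"
  shows "nested_graph C"
proof -
  let ?Gm = "\<lambda>f. (rk (cDom C f), rk (cCod C f))"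
  have F: "is_functor C (ord_cat n) rk ?Gm"
    unfolding is_functor_def
  proof (intro conjI ballI impI)
    show "category C" "category (ord_cat n)" using cat category_ord_cat by auto
    fix a assume "a \<in> cObj C"
    then show "rk a \<in> cObj (ord_cat n)" using grading_bound[OF rk] by (simp add: ord_cat_def)
  next
    fix f assume f: "f \<in> cArr C"
    show "?Gm f \<in> cArr (ord_cat n)"
      using grading_bound[OF rk cat_cod_obj[OF cat f]] grading_mono[OF cat rk f]
      by (simp add: ord_cat_def)
  qed (auto simp: ord_cat_def cat)
  have "is_flag (ord_cat n) (?Gm f)" if "is_flag C f" for f
  proof -
    have f: "f \<in> cArr C" "\<not> is_identity C f" using that by (auto simp: is_flag_iff)
    show ?thesis
      using grading_bound[OF rk cat_cod_obj[OF cat f(1)]] grading_strict[OF rk f]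
      by (simp add: ord_cat_flag)
  qed
  then show ?thesis unfolding nested_graph_def using cat F by blast
qed

lemma nested_comp_identityD:
  assumes "nested_graph C" "f \<in> cArr C" "g \<in> cArr C" "cCod C f = cDom C g"
    and "is_identity C (cComp C g f)"
  shows "is_identity C f \<and> is_identity C g"
proof -
  have cat: "category C" using assms(1) by (simp add: nested_graph_def)
  obtain n rk where rk: "grading C n rk" using nested_graph_grading[OF assms(1)] .
  have "cCod C g = cDom C f"
    using is_identity_cod[OF cat cat_comp_arr[OF cat assms(2-4)] assms(5)] cat assms(2-4) by simp
  then show ?thesis
    using grading_mono[OF cat rk] grading_strict[OF rk] assms(2-4) by (metis leD)
qed

lemma nested_comp_not_identity:
  "nested_graph C \<Longrightarrow> f \<in> cArr C \<Longrightarrow> g \<in> cArr C \<Longrightarrow> cCod C f = cDom C g \<Longrightarrow>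
   \<not> is_identity C f \<or> \<not> is_identity C g \<Longrightarrow> \<not> is_identity C (cComp C g f)"
  using nested_comp_identityD[of C f g] by blast

lemma nested_graph_fiber:
  assumes N: "nested_graph C" and F: "is_functor C D Fo Fm" and A: "A \<in> cObj D"
  shows "nested_graph (fiber C D Fo Fm A)"
proof -
  obtain n rk where "grading C n rk" using nested_graph_grading[OF N] .
  then have "grading (fiber C D Fo Fm A) n rk"
    by (simp add: grading_def fiber_def is_identity_def)
  then show ?thesis using nested_graphI_grading category_fiber[OF F A] by blast
qed

lemma qpath_single[simp]: "qpath C R [f] \<longleftrightarrow> f \<in> cArr C"
  by (simp add: qpath_def)

lemma qpath_nonempty: "qpath C R p \<Longrightarrow> p \<noteq> []"
  by (simp add: qpath_def)

lemma qpath_set: "qpath C R p \<Longrightarrow> set p \<subseteq> cArr C"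
  by (simp add: qpath_def)

lemma qpath_Cons:
  "r \<noteq> [] \<Longrightarrow> qpath C R (f # r) \<longleftrightarrow> f \<in> cArr C \<and> (cCod C f, cDom C (hd r)) \<in> R \<and> qpath C R r"
  unfolding qpath_def by (auto simp: hd_conv_nth nth_Cons split: nat.splits)

lemma qpath_Cons2[simp]:
  "qpath C R (f # g # r) \<longleftrightarrow> f \<in> cArr C \<and> (cCod C f, cDom C g) \<in> R \<and> qpath C R (g # r)"
  using qpath_Cons[of "g # r"] by simp

lemma qpath_append:
  "x \<noteq> [] \<Longrightarrow> y \<noteq> [] \<Longrightarrow>
   qpath C R (x @ y) \<longleftrightarrow> qpath C R x \<and> qpath C R y \<and> (cCod C (last x), cDom C (hd y)) \<in> R"
proof (induction x)
  case (Cons a x)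
  then show ?case
    using qpath_Cons[of "x @ y" C R a] qpath_Cons[of x C R a] qpath_Cons[of y C R a]
    by (cases "x = []") auto
qed simp

lemma qpath_append3:
  "m \<noteq> [] \<Longrightarrow> qpath C R (p @ m @ q) \<longleftrightarrow> qpath C R m \<and>
   (p \<noteq> [] \<longrightarrow> qpath C R p \<and> (cCod C (last p), cDom C (hd m)) \<in> R) \<and>
   (q \<noteq> [] \<longrightarrow> qpath C R q \<and> (cCod C (last m), cDom C (hd q)) \<in> R)"
  by (cases "p = []"; cases "q = []") (auto simp: qpath_append)

lemma hd_append3: "m \<noteq> [] \<Longrightarrow> hd (p @ m @ q) = (if p = [] then hd m else hd p)"
  by (cases p) auto

lemma last_append3: "m \<noteq> [] \<Longrightarrow> last (p @ m @ q) = (if q = [] then last m else last q)"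
  by (cases q rule: rev_cases) auto

lemma qeq_refl[simp]: "(x, x) \<in> qeq C R"
  by (simp add: qeq_def)

lemma qeq_sym: "(x, y) \<in> qeq C R \<Longrightarrow> (y, x) \<in> qeq C R"
  unfolding qeq_def
  by (metis converse_Un converse_converse converse_iff rtrancl_converse sup_commute)

lemma qeq_trans: "(x, y) \<in> qeq C R \<Longrightarrow> (y, z) \<in> qeq C R \<Longrightarrow> (x, z) \<in> qeq C R"
  unfolding qeq_def by (rule rtrancl_trans)

lemma qeq_step: "(x, y) \<in> qstep C R \<Longrightarrow> (x, y) \<in> qeq C R"
  unfolding qeq_def by auto

lemma qeq_equiv: "equiv UNIV (qeq C R)"
  by (auto simp: equiv_def refl_on_def sym_def trans_def intro: qeq_sym qeq_trans)

lemma qeq_invariant: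
  assumes "\<And>u v. (u, v) \<in> qstep C R \<Longrightarrow> h u = h v" and "(x, y) \<in> qeq C R"
  shows "h x = h y"
  using assms(2) unfolding qeq_def
  by (induction rule: rtrancl_induct) (auto dest: assms(1))

lemma qeq_map:
  assumes "(x, y) \<in> qeq C R" "I x"
    and stable: "\<And>u v. (u, v) \<in> qstep C R \<Longrightarrow> I u \<longleftrightarrow> I v"
    and compat: "\<And>u v. (u, v) \<in> qstep C R \<Longrightarrow> I u \<Longrightarrow> (h u, h v) \<in> qeq C R"
  shows "(h x, h y) \<in> qeq C R"
proof -
  have "(h x, h y) \<in> qeq C R \<and> I y"
    using assms(1) unfolding qeq_def
  proof (induction rule: rtrancl_induct)
    case (step y z)
    then have IH: "(h x, h y) \<in> qeq C R" "I y" by (simp_all add: qeq_def)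
    from step(2) consider "(y, z) \<in> qstep C R" | "(z, y) \<in> qstep C R" by blast
    then show ?case
    proof cases
      case 1
      then show ?thesis using IH stable[OF 1] compat[OF 1] qeq_trans unfolding qeq_def by blast
    next
      case 2
      then have "I z" using IH(2) stable[OF 2] by blast
      then show ?thesis using IH compat[OF 2] qeq_sym qeq_trans unfolding qeq_def by blast
    qed
  qed (simp add: assms(2))
  then show ?thesis ..
qed

fun path_value :: "('p, 'n) cat \<Rightarrow> ('m \<Rightarrow> 'n) \<Rightarrow> 'm list \<Rightarrow> 'n" where
  "path_value D Fm [] = undefined"
| "path_value D Fm [f] = Fm f"
| "path_value D Fm (f # g # r) = cComp D (path_value D Fm (g # r)) (Fm f)"

lemma path_value_Cons: "r \<noteq> [] \<Longrightarrow> path_value D Fm (f # r) = cComp D (path_value D Fm r) (Fm f)"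
  by (cases r) auto

section \<open>The quotient category by an equivalence relation on objects\<close>

locale obj_quotient =
  fixes C :: "('o, 'm) cat" and R :: "'o rel"
  assumes cat: "category C" and eqv: "equiv (cObj C) R"
begin

abbreviation dom_class :: "'m list \<Rightarrow> 'o set" where "dom_class p \<equiv> R `` {cDom C (hd p)}"
abbreviation cod_class :: "'m list \<Rightarrow> 'o set" where "cod_class p \<equiv> R `` {cCod C (last p)}"

lemma R_obj: "(a, b) \<in> R \<Longrightarrow> a \<in> cObj C \<and> b \<in> cObj C"
  using eqv by (auto simp: equiv_def refl_on_def)
lemma R_refl: "a \<in> cObj C \<Longrightarrow> (a, a) \<in> R"
  using eqv by (auto simp: equiv_def refl_on_def)
lemma R_sym: "(a, b) \<in> R \<Longrightarrow> (b, a) \<in> R"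
  using eqv by (auto simp: equiv_def sym_def)
lemma R_trans: "(a, b) \<in> R \<Longrightarrow> (b, c) \<in> R \<Longrightarrow> (a, c) \<in> R"
  using eqv by (auto simp: equiv_def trans_def)
lemma R_class_eq: "(a, b) \<in> R \<Longrightarrow> R `` {a} = R `` {b}"
  using eqv equiv_class_eq by fastforce
lemma R_class_eq_iff: "a \<in> cObj C \<Longrightarrow> R `` {a} = R `` {b} \<longleftrightarrow> (a, b) \<in> R"
  using eqv by (metis R_class_eq R_refl R_sym Image_singleton_iff)

lemma qpath_hd_arr: "qpath C R p \<Longrightarrow> hd p \<in> cArr C"
  by (metis hd_in_set qpath_set qpath_nonempty subsetD)
lemma qpath_last_arr: "qpath C R p \<Longrightarrow> last p \<in> cArr C"
  by (metis last_in_set qpath_set qpath_nonempty subsetD)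
lemma qpath_hd_dom_obj: "qpath C R p \<Longrightarrow> cDom C (hd p) \<in> cObj C"
  using qpath_hd_arr cat_dom_obj[OF cat] by blast
lemma qpath_last_cod_obj: "qpath C R p \<Longrightarrow> cCod C (last p) \<in> cObj C"
  using qpath_last_arr cat_cod_obj[OF cat] by blast

lemma qpath_junction:
  "qpath C R p \<Longrightarrow> cod_class p = dom_class q \<Longrightarrow> (cCod C (last p), cDom C (hd q)) \<in> R"
  using R_class_eq_iff qpath_last_cod_obj by blast

lemma qstep_comp_ends:
  assumes x: "x = p @ [f, g] @ q" and y: "y = p @ [cComp C g f] @ q"
    and qx: "qpath C R x" and fg: "cCod C f = cDom C g"
  shows "qpath C R y \<and> dom_class x = dom_class y \<and> cod_class x = cod_class y"
proof -
  have A: "qpath C R [f, g] \<and>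
      (p \<noteq> [] \<longrightarrow> qpath C R p \<and> (cCod C (last p), cDom C f) \<in> R) \<and>
      (q \<noteq> [] \<longrightarrow> qpath C R q \<and> (cCod C g, cDom C (hd q)) \<in> R)"
    using qx x qpath_append3[of "[f,g]" C R p q] by simp
  then have f: "f \<in> cArr C" and g: "g \<in> cArr C" by auto
  have d: "cDom C (cComp C g f) = cDom C f" and c: "cCod C (cComp C g f) = cCod C g"
    using cat f g fg by auto
  have "qpath C R y"
    unfolding y using A cat_comp_arr[OF cat f g fg] d c by (subst qpath_append3) auto
  moreover have "dom_class x = dom_class y"
    using x y d hd_append3[of "[f,g]" p q] hd_append3[of "[cComp C g f]" p q] by simp
  moreover have "cod_class x = cod_class y"
    using x y c last_append3[of "[f,g]" p q] last_append3[of "[cComp C g f]" p q] by simp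
  ultimately show ?thesis by blast
qed

lemma qstep_id_ends:
  assumes x: "x = p @ [cId C a] @ q" and y: "y = p @ q" and ne: "p @ q \<noteq> []"
    and qx: "qpath C R x" and a: "a \<in> cObj C"
  shows "qpath C R y \<and> dom_class x = dom_class y \<and> cod_class x = cod_class y"
proof -
  have A: "(p \<noteq> [] \<longrightarrow> qpath C R p \<and> (cCod C (last p), a) \<in> R) \<and>
      (q \<noteq> [] \<longrightarrow> qpath C R q \<and> (a, cDom C (hd q)) \<in> R)"
    using qx x qpath_append3[of "[cId C a]" C R p q] cat a by simp
  have "qpath C R y"
  proof (cases "p = [] \<or> q = []")
    case True then show ?thesis using y ne A by auto
  next
    case False
    then have "(cCod C (last p), cDom C (hd q)) \<in> R" using A R_trans by blast
    then show ?thesis using False y A qpath_append[of p q C R] by simp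
  qed
  moreover have "dom_class x = dom_class y"
    using x y ne A cat a R_class_eq by (cases "p = []") auto
  moreover have "cod_class x = cod_class y"
    using x y ne A cat a R_class_eq by (cases "q = []") auto
  ultimately show ?thesis by blast
qed

lemma qstep_ends:
  assumes "(x, y) \<in> qstep C R"
  shows "qpath C R x \<and> qpath C R y \<and> dom_class x = dom_class y \<and> cod_class x = cod_class y"
  using assms
proof cases
  case (qstep_comp p f g q)
  then show ?thesis using qstep_comp_ends by blast
next
  case (qstep_id p a q)
  then show ?thesis using qstep_id_ends by blast
qed

lemma qeq_ends:
  assumes "(x, y) \<in> qeq C R" "qpath C R x"
  shows "qpath C R y \<and> dom_class x = dom_class y \<and> cod_class x = cod_class y"
proof -
  have "(qpath C R x, dom_class x, cod_class x) = (qpath C R y, dom_class y, cod_class y)"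
    using qeq_invariant[OF _ assms(1), of "\<lambda>u. (qpath C R u, dom_class u, cod_class u)"] qstep_ends
    by auto
  then show ?thesis using assms(2) by simp
qed

lemma qstep_append_right:
  assumes "(x, y) \<in> qstep C R" "qpath C R z" "(cCod C (last x), cDom C (hd z)) \<in> R"
  shows "(x @ z, y @ z) \<in> qstep C R"
proof -
  have "qpath C R (x @ z)" using assms qstep_ends qpath_append qpath_nonempty by metis
  with assms(1) show ?thesis
  proof cases
    case (qstep_comp p f g q)
    then show ?thesis using \<open>qpath C R (x @ z)\<close> qstep.qstep_comp[of C R p f g "q @ z"] by simp
  next
    case (qstep_id p a q)
    then show ?thesis using \<open>qpath C R (x @ z)\<close> qstep.qstep_id[of C R p a "q @ z"] by auto
  qed
qed

lemma qstep_append_left: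
  assumes "(x, y) \<in> qstep C R" "qpath C R z" "(cCod C (last z), cDom C (hd x)) \<in> R"
  shows "(z @ x, z @ y) \<in> qstep C R"
proof -
  have "qpath C R (z @ x)" using assms qstep_ends qpath_append qpath_nonempty by metis
  with assms(1) show ?thesis
  proof cases
    case (qstep_comp p f g q)
    then show ?thesis using \<open>qpath C R (z @ x)\<close> qstep.qstep_comp[of C R "z @ p" f g q] by simp
  next
    case (qstep_id p a q)
    then show ?thesis
      using \<open>qpath C R (z @ x)\<close> qstep.qstep_id[of C R "z @ p" a q] qpath_nonempty[OF assms(2)]
      by simp
  qed
qed

lemma qeq_append_right:
  assumes "(x, y) \<in> qeq C R" "qpath C R z" "(cCod C (last x), cDom C (hd z)) \<in> R"
  shows "(x @ z, y @ z) \<in> qeq C R"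
proof (rule qeq_map[OF assms(1), of "\<lambda>u. (cCod C (last u), cDom C (hd z)) \<in> R"])
  fix u v assume uv: "(u, v) \<in> qstep C R"
  then show "(cCod C (last u), cDom C (hd z)) \<in> R \<longleftrightarrow> (cCod C (last v), cDom C (hd z)) \<in> R"
    using qstep_ends[OF uv] R_class_eq_iff qpath_last_cod_obj by metis
  show "(cCod C (last u), cDom C (hd z)) \<in> R \<Longrightarrow> (u @ z, v @ z) \<in> qeq C R"
    using qstep_append_right[OF uv assms(2)] qeq_step by blast
qed (rule assms(3))

lemma qeq_append_left:
  assumes "(x, y) \<in> qeq C R" "qpath C R z" "(cCod C (last z), cDom C (hd x)) \<in> R"
  shows "(z @ x, z @ y) \<in> qeq C R"
proof (rule qeq_map[OF assms(1), of "\<lambda>u. (cCod C (last z), cDom C (hd u)) \<in> R"])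
  fix u v assume uv: "(u, v) \<in> qstep C R"
  then show "(cCod C (last z), cDom C (hd u)) \<in> R \<longleftrightarrow> (cCod C (last z), cDom C (hd v)) \<in> R"
    using qstep_ends[OF uv] R_class_eq_iff qpath_hd_dom_obj R_sym R_trans by metis
  show "(cCod C (last z), cDom C (hd u)) \<in> R \<Longrightarrow> (z @ u, z @ v) \<in> qeq C R"
    using qstep_append_left[OF uv assms(2)] qeq_step by blast
qed (rule assms(3))

lemma qeq_append:
  assumes "(x, x') \<in> qeq C R" "(y, y') \<in> qeq C R" "qpath C R x" "qpath C R y"
    and j: "(cCod C (last x), cDom C (hd y)) \<in> R"
  shows "(x @ y, x' @ y') \<in> qeq C R"
proof -
  have 1: "(x @ y, x' @ y) \<in> qeq C R" using qeq_append_right[OF assms(1,4) j] .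
  have x': "qpath C R x'" "cod_class x' = cod_class x" using qeq_ends[OF assms(1,3)] by auto
  then have "(cCod C (last x'), cDom C (hd y)) \<in> R"
    using j R_class_eq_iff[OF qpath_last_cod_obj[OF x'(1)]] R_trans by simp
  then have 2: "(x' @ y, x' @ y') \<in> qeq C R" using qeq_append_left[OF assms(2) x'(1)] by blast
  show ?thesis using qeq_trans[OF 1 2] .
qed

lemma qeq_id: assumes "(a, b) \<in> R" shows "([cId C a], [cId C b]) \<in> qeq C R"
proof -
  have ab: "a \<in> cObj C" "b \<in> cObj C" using R_obj assms by auto
  have q: "qpath C R [cId C a, cId C b]" using ab assms cat cat_id_arr by auto
  have "([cId C a, cId C b], [cId C b]) \<in> qstep C R"
    using qstep.qstep_id[of C R "[]" a "[cId C b]"] q ab by simp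
  moreover have "([cId C a, cId C b], [cId C a]) \<in> qstep C R"
    using qstep.qstep_id[of C R "[cId C a]" b "[]"] q ab by simp
  ultimately show ?thesis using qeq_step qeq_sym qeq_trans by blast
qed

lemma qeq_id_Cons:
  assumes p: "qpath C R p" shows "(cId C (cDom C (hd p)) # p, p) \<in> qeq C R"
proof -
  let ?a = "cDom C (hd p)"
  have a: "?a \<in> cObj C" using qpath_hd_dom_obj[OF p] .
  have "qpath C R ([] @ [cId C ?a] @ p)"
    using p a qpath_Cons[OF qpath_nonempty[OF p], of C R] cat_id_arr[OF cat a] cat R_refl by simp
  from qstep.qstep_id[OF this a] show ?thesis using qpath_nonempty[OF p] qeq_step by simp
qed

lemma qeq_id_snoc:
  assumes p: "qpath C R p" shows "(p @ [cId C (cCod C (last p))], p) \<in> qeq C R"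
proof -
  let ?b = "cCod C (last p)"
  have b: "?b \<in> cObj C" using qpath_last_cod_obj[OF p] .
  have "qpath C R (p @ [cId C ?b] @ [])"
    using p b qpath_append[OF qpath_nonempty[OF p], of "[cId C ?b]" C R] cat_id_arr[OF cat b]
      cat R_refl by simp
  from qstep.qstep_id[OF this b] show ?thesis using qpath_nonempty[OF p] qeq_step by simp
qed

abbreviation Q :: "('o set, 'm list set) cat" where "Q \<equiv> quot_cat C R"
abbreviation cls :: "'m list \<Rightarrow> 'm list set" where "cls p \<equiv> qeq C R `` {p}"

lemma cls_eq_iff: "cls x = cls y \<longleftrightarrow> (x, y) \<in> qeq C R"
  using equiv_class_eq_iff[OF qeq_equiv[of C R]] by simp

lemma quot_arr_iff: "P \<in> cArr Q \<longleftrightarrow> (\<exists>p. qpath C R p \<and> P = cls p)"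
  by (auto simp: quot_cat_def)

lemma quot_obj: "cObj Q = cObj C // R"
  by (simp add: quot_cat_def)

lemma some_cls:
  assumes "qpath C R p"
  shows "(p, SOME p'. p' \<in> cls p) \<in> qeq C R" and "qpath C R (SOME p'. p' \<in> cls p)"
    and "dom_class (SOME p'. p' \<in> cls p) = dom_class p"
    and "cod_class (SOME p'. p' \<in> cls p) = cod_class p"
proof -
  have "(SOME p'. p' \<in> cls p) \<in> cls p" by (rule someI[of _ p]) simp
  then show 1: "(p, SOME p'. p' \<in> cls p) \<in> qeq C R" by simp
  show "qpath C R (SOME p'. p' \<in> cls p)" "dom_class (SOME p'. p' \<in> cls p) = dom_class p"
    "cod_class (SOME p'. p' \<in> cls p) = cod_class p"
    using qeq_ends[OF 1 assms] by auto
qed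

lemma quot_dom: "qpath C R p \<Longrightarrow> cDom Q (cls p) = dom_class p"
  using some_cls(3) by (simp add: quot_cat_def)

lemma quot_cod: "qpath C R p \<Longrightarrow> cCod Q (cls p) = cod_class p"
  using some_cls(4) by (simp add: quot_cat_def)

lemma quot_id: assumes "a \<in> cObj C" shows "cId Q (R `` {a}) = cls [cId C a]"
proof -
  have "(SOME b. b \<in> R `` {a}) \<in> R `` {a}" by (rule someI[of _ a]) (simp add: R_refl assms)
  then have "([cId C a], [cId C (SOME b. b \<in> R `` {a})]) \<in> qeq C R" using qeq_id by simp
  then have "cls [cId C (SOME b. b \<in> R `` {a})] = cls [cId C a]" using cls_eq_iff qeq_sym by blast
  then show ?thesis by (simp add: quot_cat_def)
qed

lemma quot_comp:
  assumes "qpath C R p" "qpath C R q" "(cCod C (last p), cDom C (hd q)) \<in> R"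
  shows "cComp Q (cls q) (cls p) = cls (p @ q)"
proof -
  let ?p = "SOME p'. p' \<in> cls p" and ?q = "SOME p'. p' \<in> cls q"
  have 1: "(?p, p) \<in> qeq C R" "(?q, q) \<in> qeq C R" using some_cls(1) assms qeq_sym by blast+
  have 2: "qpath C R ?p" "qpath C R ?q" using some_cls(2) assms by blast+
  have "cod_class ?p = cod_class p" "dom_class ?q = dom_class q" using some_cls assms by blast+
  then have 3: "(cCod C (last ?p), cDom C (hd ?q)) \<in> R"
    using assms(3) R_class_eq qpath_junction[OF 2(1)] by simp
  have "(?p @ ?q, p @ q) \<in> qeq C R" using qeq_append[OF 1 2 3] .
  then have "cls (?p @ ?q) = cls (p @ q)" using cls_eq_iff by blast
  then show ?thesis by (simp add: quot_cat_def)
qed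

lemma quot_comp_cls:
  assumes "qpath C R p" "qpath C R q" "cCod Q (cls p) = cDom Q (cls q)"
  shows "qpath C R (p @ q)" and "cComp Q (cls q) (cls p) = cls (p @ q)"
proof -
  have j: "(cCod C (last p), cDom C (hd q)) \<in> R"
    using qpath_junction assms quot_dom quot_cod by simp
  then show "qpath C R (p @ q)"
    using qpath_append[OF qpath_nonempty[OF assms(1)] qpath_nonempty[OF assms(2)], of C R] assms(1,2)
    by simp
  show "cComp Q (cls q) (cls p) = cls (p @ q)" using quot_comp assms(1,2) j .
qed

lemma quot_id_left:
  assumes p: "qpath C R p" shows "cComp Q (cls p) (cId Q (cDom Q (cls p))) = cls p"
proof -
  have a: "cDom C (hd p) \<in> cObj C" using qpath_hd_dom_obj[OF p] .
  then have "qpath C R [cId C (cDom C (hd p))]" using cat_id_arr[OF cat] by auto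
  then have "cComp Q (cls p) (cId Q (cDom Q (cls p))) = cls (cId C (cDom C (hd p)) # p)"
    using quot_dom[OF p] quot_id[OF a] quot_comp[OF _ p] a cat R_refl by simp
  then show ?thesis using qeq_id_Cons[OF p] cls_eq_iff by simp
qed

lemma quot_id_right:
  assumes p: "qpath C R p" shows "cComp Q (cId Q (cCod Q (cls p))) (cls p) = cls p"
proof -
  have b: "cCod C (last p) \<in> cObj C" using qpath_last_cod_obj[OF p] .
  then have "qpath C R [cId C (cCod C (last p))]" using cat_id_arr[OF cat] by auto
  then have "cComp Q (cId Q (cCod Q (cls p))) (cls p) = cls (p @ [cId C (cCod C (last p))])"
    using quot_cod[OF p] quot_id[OF b] quot_comp[OF p] b cat R_refl by simp
  then show ?thesis using qeq_id_snoc[OF p] cls_eq_iff by simp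
qed

lemma category_quot: "category Q"
  unfolding category_def
proof (intro conjI ballI impI)
  fix P assume "P \<in> cArr Q"
  then obtain p where p: "qpath C R p" "P = cls p" using quot_arr_iff by blast
  show "cDom Q P \<in> cObj Q"
    unfolding quot_obj quot_dom[OF p(1)] p(2) by (rule quotientI[OF qpath_hd_dom_obj[OF p(1)]])
  show "cCod Q P \<in> cObj Q"
    unfolding quot_obj quot_cod[OF p(1)] p(2) by (rule quotientI[OF qpath_last_cod_obj[OF p(1)]])
  show "cComp Q P (cId Q (cDom Q P)) = P" "cComp Q (cId Q (cCod Q P)) P = P"
    using quot_id_left[OF p(1)] quot_id_right[OF p(1)] p(2) by simp_all
next
  fix X assume "X \<in> cObj Q"
  then obtain a where a: "a \<in> cObj C" "X = R `` {a}" unfolding quot_obj by (rule quotientE)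
  have qa: "qpath C R [cId C a]" using cat_id_arr[OF cat a(1)] by simp
  show "cId Q X \<in> cArr Q" unfolding quot_arr_iff using a quot_id[OF a(1)] qa by blast
  show "cDom Q (cId Q X) = X" using a quot_id qa quot_dom cat by simp
  show "cCod Q (cId Q X) = X" using a quot_id qa quot_cod cat by simp
next
  fix P P' assume P: "P \<in> cArr Q" and P': "P' \<in> cArr Q" and e: "cCod Q P = cDom Q P'"
  obtain p where p: "qpath C R p" "P = cls p" using P quot_arr_iff by blast
  obtain q where q: "qpath C R q" "P' = cls q" using P' quot_arr_iff by blast
  have pq: "qpath C R (p @ q)" "cComp Q P' P = cls (p @ q)"
    using quot_comp_cls[OF p(1) q(1)] e p q by auto
  show "cComp Q P' P \<in> cArr Q" using pq quot_arr_iff by blast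
  show "cDom Q (cComp Q P' P) = cDom Q P"
    using pq(2) quot_dom[OF pq(1)] quot_dom[OF p(1)] p(2) qpath_nonempty[OF p(1)] by simp
  show "cCod Q (cComp Q P' P) = cCod Q P'"
    using pq(2) quot_cod[OF pq(1)] quot_cod[OF q(1)] q(2) qpath_nonempty[OF q(1)] by simp
next
  fix P P' P'' assume P: "P \<in> cArr Q" and P': "P' \<in> cArr Q" and P'': "P'' \<in> cArr Q"
    and e1: "cCod Q P = cDom Q P'" and e2: "cCod Q P' = cDom Q P''"
  obtain p where p: "qpath C R p" "P = cls p" using P quot_arr_iff by blast
  obtain q where q: "qpath C R q" "P' = cls q" using P' quot_arr_iff by blast
  obtain r where r: "qpath C R r" "P'' = cls r" using P'' quot_arr_iff by blast
  have pq: "qpath C R (p @ q)" "cComp Q P' P = cls (p @ q)"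
    using quot_comp_cls[OF p(1) q(1)] e1 p q by auto
  have qr: "qpath C R (q @ r)" "cComp Q P'' P' = cls (q @ r)"
    using quot_comp_cls[OF q(1) r(1)] e2 q r by auto
  have "cCod Q (cls (p @ q)) = cDom Q (cls r)"
    using e2 quot_cod[OF pq(1)] quot_cod[OF q(1)] qpath_nonempty[OF q(1)] q(2) r(2) by simp
  moreover have "cCod Q (cls p) = cDom Q (cls (q @ r))"
    using e1 quot_dom[OF qr(1)] quot_dom[OF q(1)] qpath_nonempty[OF q(1)] p(2) q(2) by simp
  ultimately show "cComp Q P'' (cComp Q P' P) = cComp Q (cComp Q P'' P') P"
    using quot_comp_cls(2)[OF pq(1) r(1)] quot_comp_cls(2)[OF p(1) qr(1)] pq qr p r by simp
qed

lemma cls_single_comp: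
  assumes "f \<in> cArr C" "g \<in> cArr C" "cCod C f = cDom C g"
  shows "cls [cComp C g f] = cComp Q (cls [g]) (cls [f])"
proof -
  have q: "qpath C R [f]" "qpath C R [g]" using assms by auto
  have j: "(cCod C (last [f]), cDom C (hd [g])) \<in> R"
    using assms R_refl cat_cod_obj[OF cat assms(1)] by simp
  have "cComp Q (cls [g]) (cls [f]) = cls [f, g]" using quot_comp[OF q j] by simp
  moreover have "([] @ [f, g] @ [], [] @ [cComp C g f] @ []) \<in> qstep C R"
    using qstep.qstep_comp[of C R "[]" f g "[]"] assms R_refl[OF cat_dom_obj[OF cat assms(2)]]
    by simp
  then have "cls [f, g] = cls [cComp C g f]" using qeq_step cls_eq_iff by simp
  ultimately show ?thesis by simp
qed

definition proj_obj :: "'o \<Rightarrow> 'o set" where "proj_obj a = R `` {a}"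
definition proj_arr :: "'m \<Rightarrow> 'm list set" where "proj_arr f = cls [f]"

lemma proj_functor: "is_functor C Q proj_obj proj_arr"
  unfolding is_functor_def
proof (intro conjI ballI impI)
  show "category C" by (rule cat)
  show "category Q" by (rule category_quot)
  fix a assume "a \<in> cObj C"
  then show "proj_obj a \<in> cObj Q" unfolding proj_obj_def quot_obj by (rule quotientI)
next
  fix f assume f: "f \<in> cArr C"
  then have q: "qpath C R [f]" by simp
  show "proj_arr f \<in> cArr Q" unfolding proj_arr_def quot_arr_iff using q by blast
  show "cDom Q (proj_arr f) = proj_obj (cDom C f)" "cCod Q (proj_arr f) = proj_obj (cCod C f)"
    unfolding proj_arr_def proj_obj_def using quot_dom[OF q] quot_cod[OF q] by auto
next
  fix a assume "a \<in> cObj C"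
  then show "proj_arr (cId C a) = cId Q (proj_obj a)" unfolding proj_arr_def proj_obj_def
    using quot_id by simp
next
  fix f g assume "f \<in> cArr C" "g \<in> cArr C" "cCod C f = cDom C g"
  then show "proj_arr (cComp C g f) = cComp Q (proj_arr g) (proj_arr f)"
    unfolding proj_arr_def using cls_single_comp by simp
qed

lemma proj_epi: "epi_functor C Q proj_obj proj_arr"
  unfolding epi_functor_def
proof (intro conjI subsetI)
  show "is_functor C Q proj_obj proj_arr" by (rule proj_functor)
  fix P assume "P \<in> cArr Q"
  then obtain p where p: "qpath C R p" "P = cls p" using quot_arr_iff by blast
  have "qpath C R p \<Longrightarrow> cls p \<in> generated_arrows Q (proj_arr ` cArr C)"
  proof (induction p)
    case Nil then show ?case by (simp add: qpath_def)
  next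
    case (Cons f r)
    show ?case
    proof (cases "r = []")
      case True
      then have "cls (f # r) = proj_arr f" "f \<in> cArr C" using Cons by (auto simp: proj_arr_def)
      then show ?thesis by (auto intro: generated_arrows.gen_base)
    next
      case False
      have h: "f \<in> cArr C" "(cCod C f, cDom C (hd r)) \<in> R" "qpath C R r"
        using Cons.prems qpath_Cons[OF False, of C R f] by auto
      have qf: "qpath C R [f]" using h(1) by simp
      have 1: "cls [f] \<in> generated_arrows Q (proj_arr ` cArr C)"
        using h(1) by (auto simp: proj_arr_def intro: generated_arrows.gen_base)
      have 2: "cls r \<in> generated_arrows Q (proj_arr ` cArr C)" using Cons.IH h(3) by simp
      have 3: "cCod Q (cls [f]) = cDom Q (cls r)"
        using quot_cod[OF qf] quot_dom[OF h(3)] R_class_eq[OF h(2)] by simp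
      have "cComp Q (cls r) (cls [f]) = cls (f # r)" using quot_comp[OF qf h(3)] h(2) by simp
      then show ?thesis using generated_arrows.gen_comp[OF 1 2 3] by simp
    qed
  qed
  then show "P \<in> generated_arrows Q (proj_arr ` cArr C)" using p by simp
qed

lemma proj_quotient: "is_quotient C Q proj_obj proj_arr"
  unfolding is_quotient_def
proof (intro exI conjI)
  show "equiv (cObj C) R" by (rule eqv)
  show "iso_functor Q Q id id"
    unfolding iso_functor_def is_functor_def using category_quot by (auto simp: bij_betw_def)
  show "\<forall>a\<in>cObj C. id (R `` {a}) = proj_obj a" by (simp add: proj_obj_def)
  show "\<forall>f\<in>cArr C. id (cls [f]) = proj_arr f" by (simp add: proj_arr_def)
qed

end

locale compatible_functor = obj_quotient C R for C :: "('o, 'm) cat" and R +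
  fixes D :: "('p, 'n) cat" and Fo :: "'o \<Rightarrow> 'p" and Fm :: "'m \<Rightarrow> 'n"
  assumes F: "is_functor C D Fo Fm" and Fc: "(a, b) \<in> R \<Longrightarrow> Fo a = Fo b"
begin

abbreviation pval :: "'m list \<Rightarrow> 'n" where "pval \<equiv> path_value D Fm"

lemma category_target: "category D"
  using F functor_target_category by blast

lemma pval_arr:
  "qpath C R p \<Longrightarrow>
   pval p \<in> cArr D \<and> cDom D (pval p) = Fo (cDom C (hd p)) \<and> cCod D (pval p) = Fo (cCod C (last p))"
proof (induction p)
  case (Cons f r)
  show ?case
  proof (cases "r = []")
    case True then show ?thesis using Cons functor_arr[OF F] by simp
  next
    case False
    then have h: "f \<in> cArr C" "(cCod C f, cDom C (hd r)) \<in> R" "qpath C R r"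
      using Cons.prems qpath_Cons[OF False, of C R f] by auto
    have IH: "pval r \<in> cArr D" "cDom D (pval r) = Fo (cDom C (hd r))"
      "cCod D (pval r) = Fo (cCod C (last r))"
      using Cons.IH h by simp_all
    have ff: "Fm f \<in> cArr D" "cDom D (Fm f) = Fo (cDom C f)" "cCod D (Fm f) = Fo (cCod C f)"
      using functor_arr[OF F h(1)] by auto
    have j: "cCod D (Fm f) = cDom D (pval r)" using ff IH Fc[OF h(2)] by simp
    show ?thesis
      using path_value_Cons[OF False, of D Fm f] ff IH False
        cat_comp_arr[OF category_target ff(1) IH(1) j] cat_comp_dom[OF category_target ff(1) IH(1) j]
        cat_comp_cod[OF category_target ff(1) IH(1) j] by simp
  qed
qed (simp add: qpath_def)

lemma pval_append:
  "x \<noteq> [] \<Longrightarrow> y \<noteq> [] \<Longrightarrow> qpath C R (x @ y) \<Longrightarrow> pval (x @ y) = cComp D (pval y) (pval x)"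
proof (induction x)
  case (Cons f x)
  show ?case
  proof (cases "x = []")
    case True then show ?thesis using Cons path_value_Cons[of y D Fm f] by simp
  next
    case False
    have h: "f \<in> cArr C" "(cCod C f, cDom C (hd x)) \<in> R" "qpath C R (x @ y)"
      using Cons.prems(3) qpath_Cons[of "x @ y" C R f] False by auto
    have qx: "qpath C R x" "qpath C R y" "(cCod C (last x), cDom C (hd y)) \<in> R"
      using qpath_append[OF False Cons.prems(2)] h(3) by auto
    have IH: "pval (x @ y) = cComp D (pval y) (pval x)" using Cons.IH False Cons.prems h by simp
    have px: "pval x \<in> cArr D" "cDom D (pval x) = Fo (cDom C (hd x))"
      "cCod D (pval x) = Fo (cCod C (last x))"
      using pval_arr[OF qx(1)] by auto
    have py: "pval y \<in> cArr D" "cDom D (pval y) = Fo (cDom C (hd y))"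
      using pval_arr[OF qx(2)] by auto
    have ff: "Fm f \<in> cArr D" "cCod D (Fm f) = Fo (cCod C f)"
      using functor_arr[OF F h(1)] by auto
    have j1: "cCod D (Fm f) = cDom D (pval x)" using ff px Fc h(2) by simp
    have j2: "cCod D (pval x) = cDom D (pval y)" using px py Fc[OF qx(3)] by simp
    have "pval (f # x @ y) = cComp D (cComp D (pval y) (pval x)) (Fm f)"
      using path_value_Cons[of "x @ y" D Fm f] False IH by simp
    also have "\<dots> = cComp D (pval y) (cComp D (pval x) (Fm f))"
      using cat_comp_assoc[OF category_target ff(1) px(1) py(1) j1 j2] by simp
    also have "\<dots> = cComp D (pval y) (pval (f # x))"
      by (simp only: path_value_Cons[OF False, of D Fm f])
    finally show ?thesis by simp
  qed
qed simp

lemma pval_replace: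
  assumes "m \<noteq> []" "m' \<noteq> []" "qpath C R (p @ m @ q)" "qpath C R (p @ m' @ q)" "pval m = pval m'"
  shows "pval (p @ m @ q) = pval (p @ m' @ q)"
proof -
  have A: "pval (m @ q) = pval (m' @ q)"
  proof (cases "q = []")
    case False
    have "qpath C R (m @ q)" "qpath C R (m' @ q)"
      using assms qpath_append3 qpath_append False by (metis append_is_Nil_conv)+
    then show ?thesis using pval_append assms False by simp
  qed (use assms in simp)
  show ?thesis
  proof (cases "p = []")
    case False
    then show ?thesis using pval_append[of p "m @ q"] pval_append[of p "m' @ q"] assms A by simp
  qed (use A in simp)
qed

lemma pval_id_Cons:
  assumes "qpath C R (cId C a # q)" "a \<in> cObj C" "q \<noteq> []"
  shows "pval (cId C a # q) = pval q"
proof -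
  have "(a, cDom C (hd q)) \<in> R" "qpath C R q" using assms qpath_Cons[of q C R] cat by auto
  then have q: "pval q \<in> cArr D" "cDom D (pval q) = Fo a" using pval_arr Fc by auto
  have "pval (cId C a # q) = cComp D (pval q) (Fm (cId C a))"
    by (rule path_value_Cons[OF assms(3)])
  then show ?thesis using functor_id[OF F assms(2)] q cat_id_right[OF category_target q(1)] by simp
qed

lemma pval_id_snoc:
  assumes "qpath C R (p @ [cId C a])" "a \<in> cObj C" "p \<noteq> []"
  shows "pval (p @ [cId C a]) = pval p"
proof -
  have "(cCod C (last p), a) \<in> R" "qpath C R p"
    using assms qpath_append[of p "[cId C a]" C R] cat by auto
  then have p: "pval p \<in> cArr D" "cCod D (pval p) = Fo a" using pval_arr Fc by auto
  have "pval (p @ [cId C a]) = cComp D (Fm (cId C a)) (pval p)"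
    using pval_append[OF assms(3) _ assms(1)] by simp
  then show ?thesis using functor_id[OF F assms(2)] p cat_id_left[OF category_target p(1)] by simp
qed

lemma pval_qstep:
  assumes "(x, y) \<in> qstep C R" shows "pval x = pval y"
  using assms
proof cases
  case (qstep_comp p f g q)
  have fg: "f \<in> cArr C" "g \<in> cArr C" using qstep_comp(3) qpath_append3[of "[f,g]" C R p q] by auto
  have "pval [f, g] = pval [cComp C g f]" using functor_comp[OF F fg qstep_comp(4)] by simp
  then show ?thesis
    using pval_replace[of "[f,g]" "[cComp C g f]" p q] qstep_comp qstep_ends[OF assms] by simp
next
  case (qstep_id p a q)
  have qy: "qpath C R (p @ q)" using qstep_ends[OF assms] qstep_id by simp
  consider "p = []" | "p \<noteq> []" "q = []" | "p \<noteq> []" "q \<noteq> []" by blast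
  then show ?thesis
  proof cases
    case 1 then show ?thesis using qstep_id pval_id_Cons by simp
  next
    case 2 then show ?thesis using qstep_id pval_id_snoc by simp
  next
    case 3
    have "qpath C R (cId C a # q)"
      using qstep_id(3) qpath_append3[of "[cId C a]" C R p q] 3 by (simp add: qpath_append)
    then have "pval (p @ cId C a # q) = cComp D (pval q) (pval p)"
      using pval_append[of p "cId C a # q"] pval_id_Cons qstep_id 3 by simp
    also have "\<dots> = pval (p @ q)" using pval_append[OF 3 qy] by simp
    finally show ?thesis using qstep_id by simp
  qed
qed

lemma pval_qeq: "(x, y) \<in> qeq C R \<Longrightarrow> pval x = pval y"
  using qeq_invariant pval_qstep by metis

definition ind_obj :: "'o set \<Rightarrow> 'p" where "ind_obj X = Fo (SOME a. a \<in> X)"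
definition ind_arr :: "'m list set \<Rightarrow> 'n" where "ind_arr P = pval (SOME p. p \<in> P)"

lemma ind_obj_class: "a \<in> cObj C \<Longrightarrow> ind_obj (R `` {a}) = Fo a"
proof -
  assume a: "a \<in> cObj C"
  have "(SOME b. b \<in> R `` {a}) \<in> R `` {a}" by (rule someI[of _ a]) (simp add: R_refl a)
  then show ?thesis unfolding ind_obj_def using Fc by simp
qed

lemma ind_arr_cls: "qpath C R p \<Longrightarrow> ind_arr (cls p) = pval p"
  unfolding ind_arr_def using some_cls(1) pval_qeq by metis

lemma induced_functor: "is_functor Q D ind_obj ind_arr"
  unfolding is_functor_def
proof (intro conjI ballI impI)
  show "category Q" by (rule category_quot)
  show "category D" by (rule category_target)
next
  fix X assume "X \<in> cObj Q"
  then obtain a where a: "a \<in> cObj C" "X = R `` {a}" unfolding quot_obj by (rule quotientE)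
  have qa: "qpath C R [cId C a]" using cat_id_arr[OF cat a(1)] by simp
  show "ind_obj X \<in> cObj D" using a ind_obj_class functor_obj[OF F] by simp
  show "ind_arr (cId Q X) = cId D (ind_obj X)"
    using a quot_id[OF a(1)] ind_arr_cls[OF qa] functor_id[OF F a(1)] ind_obj_class[OF a(1)] by simp
next
  fix P assume "P \<in> cArr Q"
  then obtain p where p: "qpath C R p" "P = cls p" using quot_arr_iff by blast
  show "ind_arr P \<in> cArr D" "cDom D (ind_arr P) = ind_obj (cDom Q P)"
    "cCod D (ind_arr P) = ind_obj (cCod Q P)"
    using p ind_arr_cls pval_arr[OF p(1)] quot_dom[OF p(1)] quot_cod[OF p(1)] ind_obj_class
      qpath_hd_dom_obj[OF p(1)] qpath_last_cod_obj[OF p(1)] by auto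
next
  fix P P' assume P: "P \<in> cArr Q" and P': "P' \<in> cArr Q" and e: "cCod Q P = cDom Q P'"
  obtain p where p: "qpath C R p" "P = cls p" using P quot_arr_iff by blast
  obtain q where q: "qpath C R q" "P' = cls q" using P' quot_arr_iff by blast
  have pq: "qpath C R (p @ q)" "cComp Q P' P = cls (p @ q)"
    using quot_comp_cls[OF p(1) q(1)] e p q by auto
  then show "ind_arr (cComp Q P' P) = cComp D (ind_arr P') (ind_arr P)"
    using ind_arr_cls p q pval_append[OF qpath_nonempty[OF p(1)] qpath_nonempty[OF q(1)] pq(1)]
    by simp
qed

end

section \<open>Normal forms of paths in the quotient of a nested graph\<close>

fun reduced :: "('o, 'm) cat \<Rightarrow> 'm list \<Rightarrow> bool" where
  "reduced C [] = False"
| "reduced C [f] = (f \<in> cArr C \<and> \<not> is_identity C f)"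
| "reduced C (f # g # r) =
     (f \<in> cArr C \<and> \<not> is_identity C f \<and> cCod C f \<noteq> cDom C g \<and> reduced C (g # r))"

lemma reduced_Cons:
  "r \<noteq> [] \<Longrightarrow> reduced C (f # r) \<longleftrightarrow>
     f \<in> cArr C \<and> \<not> is_identity C f \<and> cCod C f \<noteq> cDom C (hd r) \<and> reduced C r"
  by (cases r) auto

lemma reduced_hd: "reduced C r \<Longrightarrow> hd r \<in> cArr C \<and> \<not> is_identity C (hd r)"
  by (cases r; cases "tl r") auto

lemma reduced_nonempty: "reduced C r \<Longrightarrow> r \<noteq> []"
  by auto

lemma reduced_set: "reduced C r \<Longrightarrow> x \<in> set r \<Longrightarrow> x \<in> cArr C \<and> \<not> is_identity C x"
  by (induction C r rule: reduced.induct) auto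

lemma reduced_replace_hd:
  "reduced C (a # t) \<Longrightarrow> b \<in> cArr C \<Longrightarrow> \<not> is_identity C b \<Longrightarrow> cCod C b = cCod C a \<Longrightarrow>
   reduced C (b # t)"
  by (cases t) auto

definition class_rep :: "'o rel \<Rightarrow> 'o \<Rightarrow> 'o" where
  "class_rep R a = (SOME b. (a, b) \<in> R)"

definition cons_reduce :: "('o, 'm) cat \<Rightarrow> 'm \<Rightarrow> 'm list \<Rightarrow> 'm list" where
  "cons_reduce C f r = (if is_identity C f then r else if (\<exists>i. r = [i] \<and> is_identity C i) then [f]
     else if cCod C f = cDom C (hd r) then cComp C (hd r) f # tl r else f # r)"

text \<open>A path consisting of identities normalizes to the identity at a fixed representative of the
  class of its domain, so that identities at equivalent objects get the same normal form.\<close>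

fun normal_form :: "('o, 'm) cat \<Rightarrow> 'o rel \<Rightarrow> 'm list \<Rightarrow> 'm list" where
  "normal_form C R [] = []"
| "normal_form C R [f] = (if is_identity C f then [cId C (class_rep R (cDom C f))] else [f])"
| "normal_form C R (f # g # r) = cons_reduce C f (normal_form C R (g # r))"

definition path_join :: "('o, 'm) cat \<Rightarrow> 'm list \<Rightarrow> 'm list \<Rightarrow> 'm list" where
  "path_join C s t = (if cCod C (last s) = cDom C (hd t)
     then butlast s @ [cComp C (hd t) (last s)] @ tl t else s @ t)"

lemma normal_form_Cons: "r \<noteq> [] \<Longrightarrow> normal_form C R (f # r) = cons_reduce C f (normal_form C R r)"
  by (cases r) auto

locale nested_quotient = obj_quotient C R for C :: "('o, 'm) cat" and R +
  assumes nested: "nested_graph C"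
begin

abbreviation is_normal_form :: "'m list \<Rightarrow> bool" where
  "is_normal_form r \<equiv> (\<exists>c\<in>cObj C. r = [cId C c]) \<or> reduced C r"

lemma class_rep_rel: "a \<in> cObj C \<Longrightarrow> (a, class_rep R a) \<in> R"
  unfolding class_rep_def by (rule someI[of _ a]) (rule R_refl)
lemma class_rep_eq: "(a, b) \<in> R \<Longrightarrow> class_rep R a = class_rep R b"
  unfolding class_rep_def using R_class_eq by (metis Image_singleton_iff)
lemma class_rep_obj: "a \<in> cObj C \<Longrightarrow> class_rep R a \<in> cObj C"
  using class_rep_rel R_obj by blast

lemma is_normal_form_reduced: "is_normal_form s \<Longrightarrow> \<not> (\<exists>i. s = [i] \<and> is_identity C i) \<Longrightarrow> reduced C s"
  using is_identity_id[OF cat] by auto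

lemma cons_reduce_reduced:
  assumes q: "qpath C R (f # s)" and f: "\<not> is_identity C f" and s: "reduced C s"
  shows "reduced C (cons_reduce C f s) \<and> (f # s, cons_reduce C f s) \<in> qeq C R"
proof -
  obtain h t where ht: "s = h # t" using reduced_nonempty[OF s] by (cases s) auto
  have fa: "f \<in> cArr C" using q ht by auto
  have h: "h \<in> cArr C" "\<not> is_identity C h" using reduced_hd[OF s] ht by auto
  have not_id: "\<not> (\<exists>i. s = [i] \<and> is_identity C i)" using h ht by auto
  show ?thesis
  proof (cases "cCod C f = cDom C h")
    case True
    have "([] @ [f, h] @ t, [] @ [cComp C h f] @ t) \<in> qstep C R"
      using qstep.qstep_comp[of C R "[]" f h t] q ht True by simp
    moreover have "reduced C (cComp C h f # t)"
      using reduced_replace_hd[of C h t] s ht cat_comp_arr[OF cat fa h(1) True]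
        nested_comp_not_identity[OF nested fa h(1) True] f cat fa h(1) True by simp
    moreover have "cons_reduce C f s = cComp C h f # t"
      using f h(2) True ht unfolding cons_reduce_def by simp
    ultimately show ?thesis using qeq_step ht by simp
  next
    case False
    then have "reduced C (f # s)" using reduced_Cons[of s C f] fa f s ht by simp
    moreover have "cons_reduce C f s = f # s"
      using f h(2) False ht unfolding cons_reduce_def by simp
    ultimately show ?thesis by simp
  qed
qed

lemma cons_reduce_normal:
  assumes q: "qpath C R (f # s)" and s: "is_normal_form s"
  shows "is_normal_form (cons_reduce C f s) \<and> (f # s, cons_reduce C f s) \<in> qeq C R"
proof -
  have sne: "s \<noteq> []" using s by auto
  have f: "f \<in> cArr C" and qs: "qpath C R s" using q qpath_Cons[OF sne] by auto
  consider "is_identity C f" | i where "\<not> is_identity C f" "s = [i]" "is_identity C i"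
    | "\<not> is_identity C f" "reduced C s"
    using is_normal_form_reduced s by blast
  then show ?thesis
  proof cases
    case 1
    then have "([] @ [cId C (cDom C f)] @ s, [] @ s) \<in> qstep C R"
      using qstep.qstep_id[of C R "[]" "cDom C f" s] q cat_dom_obj[OF cat f] sne
      by (simp add: is_identity_def)
    then show ?thesis using 1 s qeq_step unfolding cons_reduce_def by (simp add: is_identity_def)
  next
    case (2 i)
    have "cDom C i \<in> cObj C" using qs 2 cat_dom_obj[OF cat] by simp
    then have "([f] @ [cId C (cDom C i)] @ [], [f] @ []) \<in> qstep C R"
      using qstep.qstep_id[of C R "[f]" "cDom C i" "[]"] q 2 by (simp add: is_identity_def)
    then have "(f # s, [f]) \<in> qeq C R" using 2 qeq_step by (simp add: is_identity_def)
    then show ?thesis using 2 f unfolding cons_reduce_def by auto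
  next
    case 3
    then show ?thesis using cons_reduce_reduced[OF q] by blast
  qed
qed

lemma normal_form_normalizes:
  "qpath C R p \<Longrightarrow> is_normal_form (normal_form C R p) \<and> (p, normal_form C R p) \<in> qeq C R"
proof (induction p)
  case Nil then show ?case by (simp add: qpath_def)
next
  case (Cons f r)
  show ?case
  proof (cases "r = []")
    case True
    then have f: "f \<in> cArr C" using Cons by simp
    have fo: "cDom C f \<in> cObj C" using cat_dom_obj[OF cat f] .
    show ?thesis
    proof (cases "is_identity C f")
      case True
      have "([cId C (cDom C f)], [cId C (class_rep R (cDom C f))]) \<in> qeq C R"
        using qeq_id class_rep_rel fo by blast
      then show ?thesis using True \<open>r = []\<close> class_rep_obj[OF fo] by (auto simp: is_identity_def)
    next
      case False then show ?thesis using \<open>r = []\<close> f by simp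
    qed
  next
    case False
    have h: "f \<in> cArr C" "(cCod C f, cDom C (hd r)) \<in> R" "qpath C R r"
      using Cons.prems qpath_Cons[OF False] by auto
    have IH: "is_normal_form (normal_form C R r)" "(r, normal_form C R r) \<in> qeq C R"
      using Cons.IH h by auto
    have qs: "qpath C R (normal_form C R r)" "dom_class (normal_form C R r) = dom_class r"
      using qeq_ends[OF IH(2) h(3)] by auto
    have sne: "normal_form C R r \<noteq> []" using IH(1) by auto
    have j: "(cCod C f, cDom C (hd (normal_form C R r))) \<in> R"
      using h(2) qs(2) R_class_eq_iff qpath_hd_dom_obj[OF qs(1)] R_sym R_trans
      by (metis Image_singleton_iff)
    have q2: "qpath C R (f # normal_form C R r)" using qpath_Cons[OF sne, of C R f] h qs j by simp
    have tail: "([f] @ r, [f] @ normal_form C R r) \<in> qeq C R"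
      using qeq_append_left[OF IH(2), of "[f]"] h by simp
    have head: "is_normal_form (cons_reduce C f (normal_form C R r)) \<and>
        (f # normal_form C R r, cons_reduce C f (normal_form C R r)) \<in> qeq C R"
      using cons_reduce_normal[OF q2 IH(1)] .
    show ?thesis using normal_form_Cons[OF False, of C R f] tail head qeq_trans by auto
  qed
qed

lemma cons_reduce_comp_reduced:
  assumes f: "f \<in> cArr C" "\<not> is_identity C f" and g: "g \<in> cArr C" "\<not> is_identity C g"
    and fg: "cCod C f = cDom C g" and r: "reduced C r"
  shows "cons_reduce C f (cons_reduce C g r) = cons_reduce C (cComp C g f) r"
proof -
  have gf: "cComp C g f \<in> cArr C" "\<not> is_identity C (cComp C g f)"
    "cDom C (cComp C g f) = cDom C f" "cCod C (cComp C g f) = cCod C g"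
    using cat_comp_arr[OF cat f(1) g(1) fg] nested_comp_not_identity[OF nested f(1) g(1) fg]
      f g fg cat
    by auto
  obtain h t where ht: "r = h # t" using reduced_nonempty[OF r] by (cases r) auto
  have h: "h \<in> cArr C" "\<not> is_identity C h" using reduced_hd[OF r] ht by auto
  show ?thesis
  proof (cases "cCod C g = cDom C h")
    case True
    have hg: "cComp C h g \<in> cArr C" "\<not> is_identity C (cComp C h g)"
      "cDom C (cComp C h g) = cDom C g"
      using cat_comp_arr[OF cat g(1) h(1) True] nested_comp_not_identity[OF nested g(1) h(1) True]
        g cat h(1) True by auto
    have "cons_reduce C g r = cComp C h g # t"
      using g(2) h(2) True ht unfolding cons_reduce_def by simp
    moreover have "cons_reduce C f (cComp C h g # t) = cComp C (cComp C h g) f # t"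
      using f(2) hg(2,3) fg unfolding cons_reduce_def by simp
    moreover have "cons_reduce C (cComp C g f) r = cComp C h (cComp C g f) # t"
      using gf(2,4) h(2) True ht unfolding cons_reduce_def by simp
    ultimately show ?thesis using cat_comp_assoc[OF cat f(1) g(1) h(1) fg True] by simp
  next
    case False
    have "cons_reduce C g r = g # r"
      using g(2) h(2) False ht unfolding cons_reduce_def by simp
    moreover have "cons_reduce C f (g # r) = cComp C g f # r"
      using f(2) g(2) fg unfolding cons_reduce_def by simp
    moreover have "cons_reduce C (cComp C g f) r = cComp C g f # r"
      using gf(2,4) h(2) False ht unfolding cons_reduce_def by simp
    ultimately show ?thesis by simp
  qed
qed

lemma cons_reduce_comp:
  assumes f: "f \<in> cArr C" and g: "g \<in> cArr C" and fg: "cCod C f = cDom C g"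
    and r: "is_normal_form r"
  shows "cons_reduce C f (cons_reduce C g r) = cons_reduce C (cComp C g f) r"
proof (cases "is_identity C g")
  case True
  then show ?thesis using comp_identity_left[OF cat f g fg True] by (simp add: cons_reduce_def)
next
  case ng: False
  show ?thesis
  proof (cases "is_identity C f")
    case True
    then show ?thesis using comp_identity_right[OF cat f g fg True] by (simp add: cons_reduce_def)
  next
    case nf: False
    have gf: "cComp C g f \<in> cArr C" "\<not> is_identity C (cComp C g f)"
      using cat_comp_arr[OF cat f g fg] nested_comp_not_identity[OF nested f g fg] nf by auto
    show ?thesis
    proof (cases "\<exists>i. r = [i] \<and> is_identity C i")
      case True
      have "cons_reduce C g r = [g]" using True ng by (simp add: cons_reduce_def)
      moreover have "cons_reduce C f [g] = [cComp C g f]"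
        using nf ng fg by (simp add: cons_reduce_def)
      moreover have "cons_reduce C (cComp C g f) r = [cComp C g f]"
        using True gf by (simp add: cons_reduce_def)
      ultimately show ?thesis by simp
    next
      case False
      then show ?thesis
        using cons_reduce_comp_reduced[OF f nf g ng fg] is_normal_form_reduced r by blast
    qed
  qed
qed

lemma normal_form_pair:
  assumes f: "f \<in> cArr C" and g: "g \<in> cArr C" and fg: "cCod C f = cDom C g"
  shows "normal_form C R [f, g] = normal_form C R [cComp C g f]"
proof (cases "is_identity C g")
  case True
  have go: "cDom C g \<in> cObj C" using cat_dom_obj[OF cat g] .
  have "normal_form C R [f, g] = cons_reduce C f [cId C (class_rep R (cDom C g))]"
    using True by simp
  moreover have "is_identity C (cId C (class_rep R (cDom C g)))"
    using is_identity_id[OF cat class_rep_obj[OF go]] .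
  moreover have "cComp C g f = f" using comp_identity_left[OF cat f g fg True] .
  ultimately show ?thesis using is_identity_cod[OF cat f] fg by (auto simp: cons_reduce_def)
next
  case False
  then show ?thesis
    using comp_identity_right[OF cat f g fg] nested_comp_not_identity[OF nested f g fg] fg
    by (auto simp: cons_reduce_def)
qed

lemma normal_form_append_cong:
  "x \<noteq> [] \<Longrightarrow> y \<noteq> [] \<Longrightarrow> normal_form C R x = normal_form C R y \<Longrightarrow>
   normal_form C R (p @ x) = normal_form C R (p @ y)"
  by (induction p) (auto simp: normal_form_Cons)

lemma normal_form_qstep_comp:
  assumes "qpath C R (p @ [f, g] @ q)" "cCod C f = cDom C g"
  shows "normal_form C R (p @ [f, g] @ q) = normal_form C R (p @ [cComp C g f] @ q)"
proof (rule normal_form_append_cong)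
  have fg: "f \<in> cArr C" "g \<in> cArr C" using assms(1) qpath_append3[of "[f,g]" C R p q] by auto
  show "normal_form C R ([f, g] @ q) = normal_form C R ([cComp C g f] @ q)"
  proof (cases "q = []")
    case True then show ?thesis using normal_form_pair[OF fg assms(2)] by simp
  next
    case False
    have "qpath C R q" using assms(1) qpath_append3[of "[f,g]" C R p q] False by auto
    then have "is_normal_form (normal_form C R q)" using normal_form_normalizes by blast
    then show ?thesis
      using normal_form_Cons[OF False, of C R g] normal_form_Cons[OF False, of C R "cComp C g f"]
        cons_reduce_comp[OF fg assms(2)] by simp
  qed
qed simp_all

lemma normal_form_qstep_id:
  assumes "qpath C R (p @ [cId C a] @ q)" "a \<in> cObj C" "p @ q \<noteq> []"
  shows "normal_form C R (p @ [cId C a] @ q) = normal_form C R (p @ q)"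
proof (cases "q = []")
  case False
  show ?thesis
    by (rule normal_form_append_cong)
      (use False is_identity_id[OF cat assms(2)]
        in \<open>simp_all add: normal_form_Cons cons_reduce_def\<close>)
next
  case True
  then obtain p' b where p: "p = p' @ [b]" using assms(3) by (cases p rule: rev_cases) auto
  have "qpath C R ([b] @ [cId C a])"
    using assms(1) True p qpath_append3[of "[b]" C R p' "[cId C a]"] by simp
  then have b: "b \<in> cArr C" and ba: "(cCod C b, a) \<in> R" using cat assms(2) by auto
  then have rep: "class_rep R a = class_rep R (cCod C b)" using class_rep_eq by simp
  have "normal_form C R [b, cId C a] = normal_form C R [b]"
    using is_identity_cod[OF cat b] rep is_identity_id[OF cat class_rep_obj[OF assms(2)]]
      is_identity_id[OF cat assms(2)] cat assms(2)
    by (auto simp: cons_reduce_def)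
  then show ?thesis using True p normal_form_append_cong[of "[b, cId C a]" "[b]" p'] by simp
qed

lemma normal_form_qstep:
  assumes "(x, y) \<in> qstep C R" shows "normal_form C R x = normal_form C R y"
  using assms
proof cases
  case (qstep_comp p f g q)
  then show ?thesis using normal_form_qstep_comp by simp
next
  case (qstep_id p a q)
  then show ?thesis using normal_form_qstep_id by simp
qed

lemma normal_form_qeq: "(x, y) \<in> qeq C R \<Longrightarrow> normal_form C R x = normal_form C R y"
  using qeq_invariant normal_form_qstep by metis

lemma normal_form_reduced: "reduced C t \<Longrightarrow> normal_form C R t = t"
proof (induction t)
  case Nil then show ?case by simp
next
  case (Cons f t)
  show ?case
  proof (cases "t = []")
    case True then show ?thesis using Cons by simp
  next
    case False
    have h: "f \<in> cArr C" "\<not> is_identity C f" "cCod C f \<noteq> cDom C (hd t)" "reduced C t"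
      using Cons.prems reduced_Cons[OF False, of C f] by auto
    have "normal_form C R t = t" using Cons.IH h by simp
    moreover have "\<not> is_identity C (hd t)" using reduced_hd[OF h(4)] by simp
    ultimately show ?thesis
      using normal_form_Cons[OF False, of C R f] h False unfolding cons_reduce_def
      by (cases t) auto
  qed
qed

lemma path_join_hd:
  assumes s: "reduced C s" and t: "reduced C t"
  shows "path_join C s t \<noteq> [] \<and> cDom C (hd (path_join C s t)) = cDom C (hd s) \<and>
    \<not> is_identity C (hd (path_join C s t))"
proof (cases "cCod C (last s) = cDom C (hd t)")
  case True
  have ls: "last s \<in> cArr C" "\<not> is_identity C (last s)"
    using reduced_set[OF s] reduced_nonempty[OF s] by auto
  have ht: "hd t \<in> cArr C" using reduced_hd[OF t] by simp
  have c: "\<not> is_identity C (cComp C (hd t) (last s))"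
    "cDom C (cComp C (hd t) (last s)) = cDom C (last s)"
    using nested_comp_not_identity[OF nested ls(1) ht True] ls cat ht True by auto
  have sb: "s = butlast s @ [last s]"
    using append_butlast_last_id[OF reduced_nonempty[OF s]] by simp
  show ?thesis
  proof (cases "butlast s = []")
    case True
    then have "hd s = last s" using sb by (metis append_Nil list.sel(1))
    then show ?thesis using c True \<open>cCod C (last s) = cDom C (hd t)\<close> by (simp add: path_join_def)
  next
    case False
    then have "hd (butlast s) = hd s" using sb by (metis hd_append2)
    then show ?thesis using False \<open>cCod C (last s) = cDom C (hd t)\<close> reduced_hd[OF s]
      by (simp add: path_join_def)
  qed
next
  case False
  then show ?thesis using reduced_nonempty[OF s] reduced_hd[OF s] by (simp add: path_join_def)
qed

lemma normal_form_append_reduced: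
  assumes "reduced C s" "reduced C t"
  shows "normal_form C R (s @ t) = path_join C s t"
  using assms(1)
proof (induction s)
  case (Cons a s)
  have tne: "t \<noteq> []" using reduced_nonempty[OF assms(2)] .
  have th: "\<not> is_identity C (hd t)" using reduced_hd[OF assms(2)] by simp
  show ?case
  proof (cases "s = []")
    case True
    have "normal_form C R (a # t) = cons_reduce C a t"
      using normal_form_Cons[OF tne, of C R a] normal_form_reduced[OF assms(2)] by simp
    then show ?thesis using True Cons.prems th tne unfolding cons_reduce_def path_join_def
      by (cases t) auto
  next
    case False
    have a: "\<not> is_identity C a" "cCod C a \<noteq> cDom C (hd s)" "reduced C s"
      using Cons.prems reduced_Cons[OF False, of C a] by auto
    have W: "path_join C s t \<noteq> []" "cDom C (hd (path_join C s t)) = cDom C (hd s)"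
      "\<not> is_identity C (hd (path_join C s t))"
      using path_join_hd[OF a(3) assms(2)] by auto
    have "normal_form C R (a # s @ t) = cons_reduce C a (path_join C s t)"
      using normal_form_Cons[of "s @ t" C R a] Cons.IH a(3) False by simp
    also have "\<dots> = a # path_join C s t"
      using a W unfolding cons_reduce_def by (cases "path_join C s t") auto
    also have "\<dots> = path_join C (a # s) t"
      using False by (simp add: path_join_def)
    finally show ?thesis by simp
  qed
qed simp

lemma quot_flag_iff:
  assumes p: "qpath C R p" shows "is_flag Q (cls p) \<longleftrightarrow> reduced C (normal_form C R p)"
proof -
  let ?d = "cDom C (hd p)"
  have d: "?d \<in> cObj C" using qpath_hd_dom_obj[OF p] .
  have idc: "cId Q (cDom Q (cls p)) = cls [cId C ?d]" using quot_dom[OF p] quot_id[OF d] by simp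
  have arr: "cls p \<in> cArr Q" using quot_arr_iff p by blast
  have "cls p = cls [cId C ?d] \<longleftrightarrow> \<not> reduced C (normal_form C R p)"
  proof
    assume "cls p = cls [cId C ?d]"
    then have "(p, [cId C ?d]) \<in> qeq C R" using cls_eq_iff by blast
    then have "normal_form C R p = normal_form C R [cId C ?d]" using normal_form_qeq by blast
    also have "\<dots> = [cId C (class_rep R ?d)]"
      using is_identity_id[OF cat d] cat_id_dom[OF cat d] by simp
    finally show "\<not> reduced C (normal_form C R p)"
      using is_identity_id[OF cat class_rep_obj[OF d]] by simp
  next
    assume nr: "\<not> reduced C (normal_form C R p)"
    have n: "is_normal_form (normal_form C R p)" "(p, normal_form C R p) \<in> qeq C R"
      using normal_form_normalizes[OF p] by auto
    then obtain c where c: "c \<in> cObj C" "normal_form C R p = [cId C c]" using nr by blast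
    have "dom_class (normal_form C R p) = dom_class p" using qeq_ends[OF n(2) p] by simp
    then have "R `` {c} = R `` {?d}" using c cat by simp
    then have "(c, ?d) \<in> R" using R_class_eq_iff c(1) by blast
    then have "([cId C c], [cId C ?d]) \<in> qeq C R" using qeq_id by blast
    then have "(p, [cId C ?d]) \<in> qeq C R" using n(2) c(2) qeq_trans by metis
    then show "cls p = cls [cId C ?d]" using cls_eq_iff by blast
  qed
  then show ?thesis using idc arr unfolding is_flag_def by auto
qed

lemma quot_flagE:
  assumes "is_flag Q P"
  obtains s where "qpath C R s" "reduced C s" "P = cls s"
proof -
  obtain p where p: "qpath C R p" "P = cls p"
    using assms quot_arr_iff unfolding is_flag_def by blast
  have ps: "(p, normal_form C R p) \<in> qeq C R" using normal_form_normalizes[OF p(1)] by simp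
  show thesis
  proof
    show "qpath C R (normal_form C R p)" using qeq_ends[OF ps p(1)] by simp
    show "reduced C (normal_form C R p)" using quot_flag_iff[OF p(1)] p(2) assms by simp
    show "P = cls (normal_form C R p)" using p(2) cls_eq_iff ps by simp
  qed
qed

lemma quot_flag_single: "is_flag C f \<Longrightarrow> is_flag Q (cls [f])"
  using quot_flag_iff[of "[f]"] by (simp add: is_flag_iff)

lemma path_join_single_reducible:
  assumes s: "reduced C s" and t: "reduced C t" and f: "path_join C s t = [f]"
  shows "\<exists>g h. is_flag C g \<and> is_flag C h \<and> cCod C h = cDom C g \<and> f = cComp C g h"
proof (cases "cCod C (last s) = cDom C (hd t)")
  case True
  then have "[f] = butlast s @ cComp C (hd t) (last s) # tl t" using f by (simp add: path_join_def)
  then have "butlast s = []" "tl t = []" "f = cComp C (hd t) (last s)" by (cases "butlast s"; simp)+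
  moreover have "last s \<in> cArr C" "\<not> is_identity C (last s)"
    using reduced_set[OF s] reduced_nonempty[OF s] by auto
  moreover have "hd t \<in> cArr C" "\<not> is_identity C (hd t)" using reduced_hd[OF t] by auto
  ultimately show ?thesis using True by (auto simp: is_flag_iff)
next
  case False
  then have "[f] = s @ t" using f by (simp add: path_join_def)
  then show ?thesis using reduced_nonempty[OF s] reduced_nonempty[OF t] by (cases s) auto
qed

lemma irreducible_flag_quot:
  assumes irr: "irreducible_flag C f" shows "irreducible_flag Q (cls [f])"
  unfolding irreducible_flag_def
proof (intro conjI notI)
  have f: "f \<in> cArr C" "\<not> is_identity C f"
    using irr by (auto simp: irreducible_flag_def is_flag_iff)
  then show "is_flag Q (cls [f])" using quot_flag_single by (simp add: is_flag_iff)
  assume "\<exists>G H. is_flag Q G \<and> is_flag Q H \<and> cCod Q H = cDom Q G \<and> cls [f] = cComp Q G H"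
  then obtain G H
    where GH: "is_flag Q G" "is_flag Q H" "cCod Q H = cDom Q G" "cls [f] = cComp Q G H"
    by blast
  obtain t where t: "qpath C R t" "reduced C t" "G = cls t" using quot_flagE[OF GH(1)] .
  obtain s where s: "qpath C R s" "reduced C s" "H = cls s" using quot_flagE[OF GH(2)] .
  have "cls [f] = cls (s @ t)" using quot_comp_cls(2)[OF s(1) t(1)] GH(3,4) s t by simp
  then have "normal_form C R [f] = normal_form C R (s @ t)"
    using cls_eq_iff normal_form_qeq by blast
  then have "path_join C s t = [f]" using normal_form_append_reduced[OF s(2) t(2)] f by simp
  then show False using path_join_single_reducible[OF s(2) t(2)] irr
    unfolding irreducible_flag_def by blast
qed

lemma irreducible_flag_quotE:
  assumes irr: "irreducible_flag Q P" obtains f where "irreducible_flag C f" "P = cls [f]"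
proof -
  have not_comp: "\<not> (is_flag Q G \<and> is_flag Q H \<and> cCod Q H = cDom Q G \<and> P = cComp Q G H)" for G H
    using irr unfolding irreducible_flag_def by blast
  obtain s where s: "qpath C R s" "reduced C s" "P = cls s"
    using quot_flagE irr unfolding irreducible_flag_def by blast
  obtain f s' where fs: "s = f # s'" using reduced_nonempty[OF s(2)] by (cases s) auto
  have "s' = []"
  proof (rule ccontr)
    assume ne: "s' \<noteq> []"
    have f: "is_flag C f" "reduced C s'"
      using s(2) fs reduced_Cons[OF ne, of C f] by (auto simp: is_flag_iff)
    have q: "qpath C R [f]" "qpath C R s'" "(cCod C f, cDom C (hd s')) \<in> R"
      using s(1) fs qpath_Cons[OF ne, of C R f] by auto
    have "P = cComp Q (cls s') (cls [f])" using quot_comp[OF q(1,2)] q(3) s(3) fs by simp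
    moreover have "is_flag Q (cls s')" using quot_flag_iff[OF q(2)] f(2) normal_form_reduced by simp
    moreover have "cCod Q (cls [f]) = cDom Q (cls s')"
      using quot_cod[OF q(1)] quot_dom[OF q(2)] R_class_eq[OF q(3)] by simp
    ultimately show False using not_comp quot_flag_single[OF f(1)] by blast
  qed
  then have P: "P = cls [f]" and f: "is_flag C f" using s fs by (auto simp: is_flag_iff)
  have "irreducible_flag C f"
    unfolding irreducible_flag_def
  proof (intro conjI notI)
    assume "\<exists>g h. is_flag C g \<and> is_flag C h \<and> cCod C h = cDom C g \<and> f = cComp C g h"
    then obtain g h where gh: "is_flag C g" "is_flag C h" "cCod C h = cDom C g" "f = cComp C g h"
      by blast
    have gh_arr: "g \<in> cArr C" "h \<in> cArr C" using gh(1,2) by (simp_all add: is_flag_def)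
    have "P = cComp Q (cls [g]) (cls [h])"
      using cls_single_comp[OF gh_arr(2,1) gh(3)] P gh(4) by simp
    moreover have "cCod Q (cls [h]) = cDom Q (cls [g])"
      using quot_cod[of "[h]"] quot_dom[of "[g]"] gh_arr gh(3) by simp
    ultimately show False using not_comp quot_flag_single gh(1,2) by blast
  qed (rule f)
  then show thesis using P that by blast
qed

lemma proj_admissible: "admissible C Q proj_obj proj_arr"
  unfolding admissible_def
proof (intro conjI allI impI)
  show "is_functor C Q proj_obj proj_arr" by (rule proj_functor)
  fix f assume "irreducible_flag C f"
  then show "contracts C Q proj_obj proj_arr f \<or> irreducible_flag Q (proj_arr f)"
    using irreducible_flag_quot by (simp add: proj_arr_def)
next
  fix f g assume f: "irreducible_flag C f" and c: "contracts C Q proj_obj proj_arr f"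
  have "is_flag Q (cls [f])" using irreducible_flag_quot[OF f] by (simp add: irreducible_flag_def)
  moreover have "f \<in> cArr C" using f by (simp add: irreducible_flag_def is_flag_def)
  ultimately have "\<not> contracts C Q proj_obj proj_arr f"
    unfolding contracts_def is_flag_def proj_arr_def proj_obj_def using quot_dom[of "[f]"] by simp
  then show "contracts C Q proj_obj proj_arr g" using c by blast
qed

lemma proj_merger: "merger C Q proj_obj proj_arr"
  unfolding merger_def using proj_admissible proj_epi proj_quotient by blast

lemma qpath_grading_mono:
  assumes rk: "grading C n rk" and c: "\<And>a b. (a, b) \<in> R \<Longrightarrow> rk a = rk b" and "qpath C R p"
  shows "rk (cDom C (hd p)) \<le> rk (cCod C (last p)) \<and>
    (reduced C p \<longrightarrow> rk (cDom C (hd p)) < rk (cCod C (last p)))"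
  using assms(3)
proof (induction p)
  case (Cons f r)
  show ?case
  proof (cases "r = []")
    case True then show ?thesis using Cons grading_mono[OF cat rk] grading_strict[OF rk] by simp
  next
    case False
    have h: "f \<in> cArr C" "(cCod C f, cDom C (hd r)) \<in> R" "qpath C R r"
      using Cons.prems qpath_Cons[OF False, of C R f] by auto
    have "rk (cCod C f) = rk (cDom C (hd r))" using c h(2) by blast
    moreover have "rk (cDom C f) \<le> rk (cCod C f)" using grading_mono[OF cat rk h(1)] .
    moreover have "reduced C (f # r) \<longrightarrow> rk (cDom C f) < rk (cCod C f) \<and> reduced C r"
      using grading_strict[OF rk h(1)] reduced_Cons[OF False, of C f] by blast
    ultimately show ?thesis using Cons.IH[OF h(3)] False by auto
  qed
qed (simp add: qpath_def)

lemma nested_graph_quotI: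
  assumes rk: "grading C n rk" and c: "\<And>a b. (a, b) \<in> R \<Longrightarrow> rk a = rk b"
  shows "nested_graph Q"
proof -
  let ?G = "\<lambda>X. rk (SOME a. a \<in> X)"
  have G: "?G (R `` {a}) = rk a" if "a \<in> cObj C" for a
  proof -
    have "(SOME b. b \<in> R `` {a}) \<in> R `` {a}" by (rule someI[of _ a]) (simp add: R_refl that)
    then show ?thesis using c by simp
  qed
  have "grading Q n ?G"
    unfolding grading_def
  proof (intro conjI ballI impI)
    fix X assume "X \<in> cObj Q"
    then obtain a where "a \<in> cObj C" "X = R `` {a}" unfolding quot_obj by (rule quotientE)
    then show "?G X < n" using G grading_bound[OF rk] by simp
  next
    fix P assume "P \<in> cArr Q" "\<not> is_identity Q P"
    then have "is_flag Q P" by (simp add: is_flag_iff)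
    then obtain s where s: "qpath C R s" "reduced C s" "P = cls s" by (rule quot_flagE)
    then show "?G (cDom Q P) < ?G (cCod Q P)"
      using quot_dom[OF s(1)] quot_cod[OF s(1)] G[OF qpath_hd_dom_obj[OF s(1)]]
        G[OF qpath_last_cod_obj[OF s(1)]] qpath_grading_mono[OF rk c s(1)] by simp
  qed
  then show ?thesis using nested_graphI_grading category_quot by blast
qed

end
section \<open>Decomposing an admissible epi-functor\<close>

locale admissible_epi_functor =
  fixes N1 :: "('o, 'm) cat" and N2 :: "('p, 'n) cat" and \<phi>o :: "'o \<Rightarrow> 'p" and \<phi>m :: "'m \<Rightarrow> 'n"
  assumes nested1: "nested_graph N1" and nested2: "nested_graph N2"
    and admissible: "admissible N1 N2 \<phi>o \<phi>m" and epi: "epi_functor N1 N2 \<phi>o \<phi>m"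
begin

definition free_node :: "'o \<Rightarrow> bool" where
  "free_node x \<longleftrightarrow> x \<in> cObj N1 \<and> \<not> (\<exists>f. is_flag N1 f \<and> cDom N1 f = x \<and> \<phi>m f = cId N2 (\<phi>o x))"

definition free_rel :: "'o rel" where
  "free_rel = {(x, y). x \<in> cObj N1 \<and> y \<in> cObj N1 \<and>
     (x = y \<or> (free_node x \<and> free_node y \<and> \<phi>o x = \<phi>o y))}"

lemma category1: "category N1"
  using nested1 by (simp add: nested_graph_def)

lemma category2: "category N2"
  using nested2 by (simp add: nested_graph_def)

lemma phi_functor: "is_functor N1 N2 \<phi>o \<phi>m"
  using admissible by (simp add: admissible_def)

lemma free_rel_equiv: "equiv (cObj N1) free_rel"
  unfolding equiv_def refl_on_def sym_def trans_def free_rel_def by auto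

lemma free_rel_same_image: "(a, b) \<in> free_rel \<Longrightarrow> \<phi>o a = \<phi>o b"
  unfolding free_rel_def by auto

lemma free_rel_free: "(a, b) \<in> free_rel \<Longrightarrow> free_node b \<Longrightarrow> free_node a"
  unfolding free_rel_def by auto

sublocale QN: nested_quotient N1 free_rel
  by unfold_locales (auto simp: category1 free_rel_equiv nested1)

sublocale QF: compatible_functor N1 free_rel N2 \<phi>o \<phi>m
  by unfold_locales (auto simp: phi_functor free_rel_same_image)

abbreviation merged :: "('o set, 'm list set) cat" where "merged \<equiv> quot_cat N1 free_rel"
abbreviation \<mu>o :: "'o \<Rightarrow> 'o set" where "\<mu>o \<equiv> QN.proj_obj"
abbreviation \<mu>m :: "'m \<Rightarrow> 'm list set" where "\<mu>m \<equiv> QN.proj_arr"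
abbreviation \<kappa>o :: "'o set \<Rightarrow> 'p" where "\<kappa>o \<equiv> QF.ind_obj"
abbreviation \<kappa>m :: "'m list set \<Rightarrow> 'n" where "\<kappa>m \<equiv> QF.ind_arr"

lemma phi_obj_factors: "a \<in> cObj N1 \<Longrightarrow> \<phi>o a = \<kappa>o (\<mu>o a)"
  using QF.ind_obj_class by (simp add: QN.proj_obj_def)

lemma phi_arr_factors: "f \<in> cArr N1 \<Longrightarrow> \<phi>m f = \<kappa>m (\<mu>m f)"
  using QF.ind_arr_cls[of "[f]"] by (simp add: QN.proj_arr_def)

lemma free_node_exists:
  assumes A: "A \<in> cObj N2" shows "\<exists>y. free_node y \<and> \<phi>o y = A"
proof -
  obtain n rk where rk: "grading N1 n rk" using nested_graph_grading[OF nested1] .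
  have "x \<in> cObj N1 \<Longrightarrow> \<phi>o x = A \<Longrightarrow> \<exists>y. free_node y \<and> \<phi>o y = A" for x
  proof (induction x rule: measure_induct_rule[of "\<lambda>x. n - rk x"])
    case (less x)
    show ?case
    proof (cases "free_node x")
      case False
      then obtain f where f: "is_flag N1 f" "cDom N1 f = x" "\<phi>m f = cId N2 (\<phi>o x)"
        using less.prems unfolding free_node_def by blast
      have fa: "f \<in> cArr N1" "\<not> is_identity N1 f" using f(1) by (auto simp: is_flag_iff)
      let ?y = "cCod N1 f"
      have y: "?y \<in> cObj N1" using cat_cod_obj[OF category1 fa(1)] .
      have "\<phi>o ?y = cCod N2 (\<phi>m f)" using functor_arr[OF phi_functor fa(1)] by simp
      also have "\<dots> = \<phi>o x"
        using f(3) cat_id_cod[OF category2 functor_obj[OF phi_functor less.prems(1)]] by simp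
      finally have "\<phi>o ?y = A" using less.prems(2) by simp
      moreover have "n - rk ?y < n - rk x"
        using grading_strict[OF rk fa] grading_bound[OF rk y] f(2) by simp
      ultimately show ?thesis using less.IH y by blast
    qed (use less in blast)
  qed
  then show ?thesis using epi_functor_surj_obj[OF epi A] by blast
qed

text \<open>A grading of \<open>N\<^sub>1\<close> would not pass to the quotient, since it may separate free nodes over the
  same node of \<open>N\<^sub>2\<close>.  Grading first by the image in \<open>N\<^sub>2\<close>, and within a fiber by the grading of
  \<open>N\<^sub>1\<close> with all free nodes put on top, gives a grading constant on classes.\<close>

lemma nested_graph_merged: "nested_graph merged"
proof -
  obtain n1 rk1 where rk1: "grading N1 n1 rk1" using nested_graph_grading[OF nested1] .
  obtain n2 rk2 where rk2: "grading N2 n2 rk2" using nested_graph_grading[OF nested2] .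
  define rk where "rk x = n1 * rk2 (\<phi>o x) + (if free_node x then n1 - 1 else rk1 x)" for x
  have rk_bounds: "n1 * rk2 (\<phi>o x) \<le> rk x" "rk x < n1 * (rk2 (\<phi>o x) + 1)" if "x \<in> cObj N1" for x
    using grading_bound[OF rk1 that] unfolding rk_def by auto
  have "grading N1 (n1 * n2) rk"
    unfolding grading_def
  proof (intro conjI ballI impI)
    fix a assume a: "a \<in> cObj N1"
    have "rk2 (\<phi>o a) + 1 \<le> n2" using grading_bound[OF rk2 functor_obj[OF phi_functor a]] by simp
    then show "rk a < n1 * n2" using rk_bounds[OF a] mult_le_mono2 order_less_le_trans by blast
  next
    fix f assume f: "f \<in> cArr N1" "\<not> is_identity N1 f"
    let ?x = "cDom N1 f" and ?y = "cCod N1 f"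
    have xy: "?x \<in> cObj N1" "?y \<in> cObj N1"
      using cat_dom_obj[OF category1 f(1)] cat_cod_obj[OF category1 f(1)] by auto
    have phi_f: "\<phi>m f \<in> cArr N2" "cDom N2 (\<phi>m f) = \<phi>o ?x" "cCod N2 (\<phi>m f) = \<phi>o ?y"
      using functor_arr[OF phi_functor f(1)] by auto
    show "rk ?x < rk ?y"
    proof (cases "\<phi>m f = cId N2 (\<phi>o ?x)")
      case True
      have "\<not> free_node ?x" using f True unfolding free_node_def by (auto simp: is_flag_iff)
      moreover have "\<phi>o ?y = \<phi>o ?x"
        using phi_f True category2 functor_obj[OF phi_functor xy(1)] by (metis cat_id_cod)
      ultimately show ?thesis
        using grading_strict[OF rk1 f] grading_bound[OF rk1 xy(2)] unfolding rk_def by auto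
    next
      case False
      then have "rk2 (\<phi>o ?x) + 1 \<le> rk2 (\<phi>o ?y)"
        using grading_strict[OF rk2 phi_f(1)] phi_f by (simp add: is_identity_def)
      then show ?thesis using rk_bounds xy mult_le_mono2 by (meson order_less_le_trans order_trans)
    qed
  qed
  moreover have "rk a = rk b" if "(a, b) \<in> free_rel" for a b
    using that unfolding free_rel_def rk_def by auto
  ultimately show ?thesis using QN.nested_graph_quotI by blast
qed

lemma kappa_admissible: "admissible merged N2 \<kappa>o \<kappa>m"
  unfolding admissible_def
proof (intro conjI allI impI)
  show "is_functor merged N2 \<kappa>o \<kappa>m" by (rule QF.induced_functor)
  have mu: "\<mu>m f \<in> cArr merged" "cDom merged (\<mu>m f) = \<mu>o (cDom N1 f)" if "f \<in> cArr N1" for f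
    using functor_arr[OF QN.proj_functor that] by simp_all
  have contracts_mu: "contracts merged N2 \<kappa>o \<kappa>m (\<mu>m f) \<longleftrightarrow> contracts N1 N2 \<phi>o \<phi>m f"
    if f: "f \<in> cArr N1" for f
  proof -
    have "\<kappa>o (cDom merged (\<mu>m f)) = \<phi>o (cDom N1 f)"
      using mu(2)[OF f] phi_obj_factors[OF cat_dom_obj[OF category1 f]] by simp
    then show ?thesis using phi_arr_factors[OF f] unfolding contracts_def by simp
  qed
  have irr: "irreducible_flag N1 f \<Longrightarrow> f \<in> cArr N1" for f
    by (simp add: irreducible_flag_def is_flag_def)
  fix P assume P: "irreducible_flag merged P"
  obtain f where f: "irreducible_flag N1 f" "P = \<mu>m f"
    using QN.irreducible_flag_quotE[OF P] by (auto simp: QN.proj_arr_def)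
  have "contracts N1 N2 \<phi>o \<phi>m f \<or> irreducible_flag N2 (\<phi>m f)"
    using admissible f(1) unfolding admissible_def by blast
  then show "contracts merged N2 \<kappa>o \<kappa>m P \<or> irreducible_flag N2 (\<kappa>m P)"
    using contracts_mu[OF irr[OF f(1)]] phi_arr_factors[OF irr[OF f(1)]] f(2) by simp
  fix P' assume c: "contracts merged N2 \<kappa>o \<kappa>m P"
    and P': "irreducible_flag merged P'" and d: "cDom merged P' = cDom merged P"
  obtain g where g: "irreducible_flag N1 g" "P' = \<mu>m g"
    using QN.irreducible_flag_quotE[OF P'] by (auto simp: QN.proj_arr_def)
  have cf: "contracts N1 N2 \<phi>o \<phi>m f" using c f(2) contracts_mu[OF irr[OF f(1)]] by simp
  have "free_rel `` {cDom N1 g} = free_rel `` {cDom N1 f}"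
    using d f(2) g(2) mu(2)[OF irr[OF f(1)]] mu(2)[OF irr[OF g(1)]] by (simp add: QN.proj_obj_def)
  then have "(cDom N1 g, cDom N1 f) \<in> free_rel"
    using QN.R_class_eq_iff[OF cat_dom_obj[OF category1 irr[OF g(1)]]] by blast
  moreover have "\<not> free_node (cDom N1 f)"
    using cf f(1) unfolding free_node_def contracts_def irreducible_flag_def by blast
  ultimately have "cDom N1 g = cDom N1 f" unfolding free_rel_def by auto
  then have "contracts N1 N2 \<phi>o \<phi>m g"
    using admissible f(1) cf g(1) unfolding admissible_def by blast
  then show "contracts merged N2 \<kappa>o \<kappa>m P'" using contracts_mu[OF irr[OF g(1)]] g(2) by simp
qed

lemma kappa_epi: "epi_functor merged N2 \<kappa>o \<kappa>m"
  unfolding epi_functor_def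
proof (intro conjI subsetI)
  show "is_functor merged N2 \<kappa>o \<kappa>m" by (rule QF.induced_functor)
  have "\<phi>m ` cArr N1 \<subseteq> \<kappa>m ` cArr merged"
    using phi_arr_factors functor_arr[OF QN.proj_functor] by fastforce
  then show "g \<in> generated_arrows N2 (\<kappa>m ` cArr merged)" if "g \<in> cArr N2" for g
    using that epi generated_arrows_mono by (fastforce simp: epi_functor_def)
qed

abbreviation kappa_fiber :: "'p \<Rightarrow> ('o set, 'm list set) cat" where
  "kappa_fiber A \<equiv> fiber merged N2 \<kappa>o \<kappa>m A"

lemma kappa_fiber_flag_iff: "is_flag (kappa_fiber A) P \<longleftrightarrow> is_flag merged P \<and> \<kappa>m P = cId N2 A"
  by (auto simp: is_flag_def fiber_def)

text \<open>The first arrow of the normal form of an arrow contracted by \<open>\<kappa>\<close> is a flag contracted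
  by \<open>\<phi>\<close>, because composites of flags of \<open>N\<^sub>2\<close> are never identities.\<close>

lemma contracted_flag_starts_contracted:
  assumes P: "is_flag merged P" "is_identity N2 (\<kappa>m P)"
  obtains a where "is_flag N1 a" "\<phi>m a = cId N2 (\<phi>o (cDom N1 a))"
    and "cDom merged P = free_rel `` {cDom N1 a}"
proof -
  obtain s where s: "qpath N1 free_rel s" "reduced N1 s" "P = QN.cls s"
    using QN.quot_flagE[OF P(1)] .
  have kP: "\<kappa>m P = path_value N2 \<phi>m s" using QF.ind_arr_cls[OF s(1)] s(3) by simp
  obtain a t where at: "s = a # t" using reduced_nonempty[OF s(2)] by (cases s) auto
  have a: "a \<in> cArr N1" "\<not> is_identity N1 a" using reduced_hd[OF s(2)] at by auto
  have "is_identity N2 (\<phi>m a)"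
  proof (cases "t = []")
    case True then show ?thesis using P(2) kP at by simp
  next
    case False
    have qt: "(cCod N1 a, cDom N1 (hd t)) \<in> free_rel" "qpath N1 free_rel t"
      using s(1) at qpath_Cons[OF False, of N1 free_rel a] by auto
    have pt: "path_value N2 \<phi>m t \<in> cArr N2" "cDom N2 (path_value N2 \<phi>m t) = \<phi>o (cDom N1 (hd t))"
      using QF.pval_arr[OF qt(2)] by auto
    have pa: "\<phi>m a \<in> cArr N2" "cCod N2 (\<phi>m a) = \<phi>o (cCod N1 a)"
      using functor_arr[OF phi_functor a(1)] by auto
    have j: "cCod N2 (\<phi>m a) = cDom N2 (path_value N2 \<phi>m t)"
      using pa pt free_rel_same_image[OF qt(1)] by simp
    have "is_identity N2 (cComp N2 (path_value N2 \<phi>m t) (\<phi>m a))"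
      using P(2) kP at path_value_Cons[OF False, of N2 \<phi>m a] by simp
    then show ?thesis using nested_comp_identityD[OF nested2 pa(1) pt(1) j] by blast
  qed
  then have "\<phi>m a = cId N2 (\<phi>o (cDom N1 a))"
    using functor_arr[OF phi_functor a(1)] by (simp add: is_identity_def)
  moreover have "cDom merged P = free_rel `` {cDom N1 a}"
    using QN.quot_dom[OF s(1)] s(3) at by simp
  ultimately show thesis using that a by (simp add: is_flag_iff)
qed

lemma kappa_fiber_vertex_free:
  assumes V: "is_vertex (kappa_fiber A) V"
  obtains x where "free_node x" "\<phi>o x = A" "V = free_rel `` {x}"
proof -
  have Vo: "V \<in> cObj merged" "\<kappa>o V = A" using V by (auto simp: is_vertex_def fiber_def)
  obtain x where x: "x \<in> cObj N1" "V = free_rel `` {x}"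
    using Vo(1) unfolding QN.quot_obj by (rule quotientE)
  have px: "\<phi>o x = A" using Vo(2) x QF.ind_obj_class[OF x(1)] by simp
  have "free_node x"
  proof (rule ccontr)
    assume "\<not> free_node x"
    then obtain f where f: "is_flag N1 f" "cDom N1 f = x" "\<phi>m f = cId N2 (\<phi>o x)"
      using x(1) unfolding free_node_def by blast
    have fa: "f \<in> cArr N1" "\<not> is_identity N1 f" using f(1) by (auto simp: is_flag_iff)
    have "is_flag (kappa_fiber A) (\<mu>m f)"
      using QN.quot_flag_iff[of "[f]"] fa phi_arr_factors[OF fa(1)] f(3) px kappa_fiber_flag_iff
      by (simp add: QN.proj_arr_def)
    moreover have "cDom (kappa_fiber A) (\<mu>m f) = V"
      using functor_arr[OF QN.proj_functor fa(1)] f(2) x(2) by (simp add: fiber_def QN.proj_obj_def)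
    ultimately show False using V unfolding is_vertex_def by blast
  qed
  then show thesis using that px x by blast
qed

lemma free_node_class_vertex:
  assumes A: "A \<in> cObj N2" and y: "free_node y" "\<phi>o y = A"
  shows "is_vertex (kappa_fiber A) (free_rel `` {y})"
  unfolding is_vertex_def
proof (intro conjI notI)
  have yo: "y \<in> cObj N1" using y unfolding free_node_def by blast
  show "free_rel `` {y} \<in> cObj (kappa_fiber A)"
    using QN.quot_obj quotientI[OF yo] QF.ind_obj_class[OF yo] y by (simp add: fiber_def)
next
  assume "\<exists>P. is_flag (kappa_fiber A) P \<and> cDom (kappa_fiber A) P = free_rel `` {y}"
  then obtain P where P: "is_flag merged P" "\<kappa>m P = cId N2 A" "cDom merged P = free_rel `` {y}"
    using kappa_fiber_flag_iff by (auto simp: fiber_def)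
  obtain a where a: "is_flag N1 a" "\<phi>m a = cId N2 (\<phi>o (cDom N1 a))"
    and dom: "cDom merged P = free_rel `` {cDom N1 a}"
    using contracted_flag_starts_contracted P is_identity_id[OF category2 A] by metis
  have "cDom N1 a \<in> cObj N1" using cat_dom_obj[OF category1] a(1) by (simp add: is_flag_def)
  moreover have "free_rel `` {cDom N1 a} = free_rel `` {y}" using dom P(3) by simp
  ultimately have "(cDom N1 a, y) \<in> free_rel" using QN.R_class_eq_iff by blast
  then have "free_node (cDom N1 a)" using free_rel_free y(1) by blast
  then show False using a unfolding free_node_def by blast
qed

lemma kappa_fiber_corolla: assumes A: "A \<in> cObj N2" shows "corolla (kappa_fiber A)"
  unfolding corolla_def
proof
  show "nested_graph (kappa_fiber A)"
    using nested_graph_fiber[OF nested_graph_merged QF.induced_functor A] .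
  obtain y where y: "free_node y" "\<phi>o y = A" using free_node_exists[OF A] by blast
  show "\<exists>!V. is_vertex (kappa_fiber A) V"
  proof (rule ex1I[of _ "free_rel `` {y}"])
    show "is_vertex (kappa_fiber A) (free_rel `` {y})" using free_node_class_vertex[OF A y] .
    fix V assume "is_vertex (kappa_fiber A) V"
    then obtain x where x: "free_node x" "\<phi>o x = A" "V = free_rel `` {x}"
      by (rule kappa_fiber_vertex_free)
    then have "(x, y) \<in> free_rel" using y unfolding free_rel_def free_node_def by auto
    then show "V = free_rel `` {y}" using QN.R_class_eq x(3) by simp
  qed
qed

lemma kappa_contraction: "contraction merged N2 \<kappa>o \<kappa>m"
  unfolding contraction_def using kappa_admissible kappa_epi kappa_fiber_corolla by blast

end

theorem mainTheorem3:
  fixes N1 :: "('o, 'm) cat" and N2 :: "('p, 'n) cat"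
    and \<phi>o :: "'o \<Rightarrow> 'p" and \<phi>m :: "'m \<Rightarrow> 'n"
  assumes "nested_graph N1" and "nested_graph N2"
    and "admissible N1 N2 \<phi>o \<phi>m" and "epi_functor N1 N2 \<phi>o \<phi>m"
  shows "\<exists>(N2' :: ('o set, 'm list set) cat) \<mu>o \<mu>m \<kappa>o \<kappa>m.
           nested_graph N2' \<and> merger N1 N2' \<mu>o \<mu>m \<and> contraction N2' N2 \<kappa>o \<kappa>m \<and>
           (\<forall>a\<in>cObj N1. \<phi>o a = \<kappa>o (\<mu>o a)) \<and> (\<forall>f\<in>cArr N1. \<phi>m f = \<kappa>m (\<mu>m f))"
proof -
  interpret admissible_epi_functor N1 N2 \<phi>o \<phi>m
    using assms by unfold_locales
  have "nested_graph merged \<and> merger N1 merged \<mu>o \<mu>m \<and> contraction merged N2 \<kappa>o \<kappa>m \<and>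
      (\<forall>a\<in>cObj N1. \<phi>o a = \<kappa>o (\<mu>o a)) \<and> (\<forall>f\<in>cArr N1. \<phi>m f = \<kappa>m (\<mu>m f))"
    using nested_graph_merged QN.proj_merger kappa_contraction phi_obj_factors phi_arr_factors
    by blast
  then show ?thesis by blast
qed

end
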